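(* Let $(X,\|\cdot\|_X)$ be a Banach space, $n\in\mathbb{N}$, $\mathcal{K}\subset X$ compact and $\gamma>0$. Then there is a norm $\|\cdot\|_Y$ on $\mathbb{R}^n$ satisfying $$\max_j|y_j|\le\|y\|_Y\le\sum_{j=1}^n|y_j|\quad\text{for all } y=(y_1,\dots,y_n)\in\mathbb{R}^n,$$ such that $d_n^\gamma(\mathcal{K})_X=d^\gamma(\mathcal{K},Y)_X$.
   Context: For $k\ge1$ and a norm $\|\cdot\|_{Y_k}$ on $\mathbb{R}^k$ let $B_{Y_k}=\{y\in\mathbb{R}^k:\|y\|_{Y_k}\le1\}$. For $\mathcal{K}\subset X$ and $\gamma\ge0$, the fixed Lipschitz width is $d^\gamma(\mathcal{K},Y_k)_X=\inf_{\Phi}\sup_{f\in\mathcal{K}}\inf_{y\in B_{Y_k}}\|f-\Phi(y)\|_X$, the infimum being over all maps $\Phi:B_{Y_k}\to X$ with $\|\Phi(y)-\Phi(y')\|_X\le\gamma\|y-y'\|_{Y_k}$ for all $y,y'\in B_{Y_k}$. The Lipschitz width is $d_n^\gamma(\mathcal{K})_X=\inf_{1\le k\le n}\inf_{\|\cdot\|_{Y_k}}d^\gamma(\mathcal{K},Y_k)_X$, where the inner infimum is over all norms on $\mathbb{R}^k$. *)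

theory Defs
  imports "HOL-Analysis.Analysis"
begin

text \<open>R^k is represented as the functions nat => real vanishing outside {0..<k}
  (coordinates y_1..y_k are y 0 .. y (k-1)).\<close>

definition Rk :: "nat \<Rightarrow> (nat \<Rightarrow> real) set" where
  "Rk k = {y. \<forall>i\<ge>k. y i = 0}"

definition is_norm_on :: "nat \<Rightarrow> ((nat \<Rightarrow> real) \<Rightarrow> real) \<Rightarrow> bool" where
  "is_norm_on k N \<longleftrightarrow>
     (\<forall>y\<in>Rk k. 0 \<le> N y \<and> (N y = 0 \<longleftrightarrow> y = (\<lambda>_. 0))) \<and>
     (\<forall>c. \<forall>y\<in>Rk k. N (\<lambda>i. c * y i) = \<bar>c\<bar> * N y) \<and>
     (\<forall>y\<in>Rk k. \<forall>z\<in>Rk k. N (\<lambda>i. y i + z i) \<le> N y + N z)"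

definition unit_ball_Y :: "nat \<Rightarrow> ((nat \<Rightarrow> real) \<Rightarrow> real) \<Rightarrow> (nat \<Rightarrow> real) set" where
  "unit_ball_Y k N = {y \<in> Rk k. N y \<le> 1}"

definition lip_maps :: "real \<Rightarrow> nat \<Rightarrow> ((nat \<Rightarrow> real) \<Rightarrow> real) \<Rightarrow> ((nat \<Rightarrow> real) \<Rightarrow> 'a::real_normed_vector) set" where
  "lip_maps \<gamma> k N = {\<Phi>. \<forall>y\<in>unit_ball_Y k N. \<forall>y'\<in>unit_ball_Y k N.
       norm (\<Phi> y - \<Phi> y') \<le> \<gamma> * N (\<lambda>i. y i - y' i)}"

definition fixed_lip_width :: "real \<Rightarrow> 'a::real_normed_vector set \<Rightarrow> nat \<Rightarrow> ((nat \<Rightarrow> real) \<Rightarrow> real) \<Rightarrow> ennreal" where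
  "fixed_lip_width \<gamma> K k N =
     (INF \<Phi>\<in>(lip_maps \<gamma> k N :: ((nat \<Rightarrow> real) \<Rightarrow> 'a) set).
        SUP f\<in>K. INF y\<in>unit_ball_Y k N. ennreal (norm (f - \<Phi> y)))"

definition lip_width :: "real \<Rightarrow> 'a::real_normed_vector set \<Rightarrow> nat \<Rightarrow> ennreal" where
  "lip_width \<gamma> K n =
     (INF k\<in>{1..n}. INF N\<in>{N. is_norm_on k N}. fixed_lip_width \<gamma> K k N)"

end

theory Submission
  imports Defs "Jordan_Normal_Form.Determinant" "HOL-Complex_Analysis.Great_Picard"
begin

text \<open>
  Call a norm \<open>M\<close> on \<open>R\<^sup>n\<close> an Auerbach norm if \<open>max_norm \<le> M \<le> l1_norm\<close>. Every norm on \<open>R\<^sup>k\<close>,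
  \<open>k \<le> n\<close>, can be replaced by an Auerbach norm on \<open>R\<^sup>n\<close> without increasing the fixed Lipschitz
  width: first add the \<open>l1\<close>-norm of the coordinates \<open>k, \<dots>, n - 1\<close>, then change coordinates to an
  Auerbach basis (columns of maximal determinant in the unit ball); both steps compose the
  Lipschitz maps with a linear map between the unit balls. So it suffices to minimise the width over
  Auerbach norms. All of them are \<open>1\<close>-Lipschitz for the \<open>l1\<close>-norm, so by a diagonal argument over
  finite grids every sequence of them has a subsequence converging uniformly on the \<open>l1\<close>-sphere.
  The width is lower semicontinuous along such limits, since for \<open>c\<close>-equivalent norms the
  rescaling \<open>y \<mapsto> y / c\<close> shows that the widths differ by at most \<open>\<gamma> (1 - 1 / c\<^sup>2)\<close>. Hence the
  minimum is attained.
\<close>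

subsection \<open>Coordinates\<close>

lemma Rk_scale [simp]: "y \<in> Rk k \<Longrightarrow> (\<lambda>i. c * y i) \<in> Rk k"
  and Rk_divide [simp]: "y \<in> Rk k \<Longrightarrow> (\<lambda>i. y i / c) \<in> Rk k"
  and Rk_add [simp]: "y \<in> Rk k \<Longrightarrow> z \<in> Rk k \<Longrightarrow> (\<lambda>i. y i + z i) \<in> Rk k"
  and Rk_diff [simp]: "y \<in> Rk k \<Longrightarrow> z \<in> Rk k \<Longrightarrow> (\<lambda>i. y i - z i) \<in> Rk k"
  and Rk_zero [simp]: "(\<lambda>_. 0) \<in> Rk k"
  by (auto simp: Rk_def)

lemma Rk_sum [intro]: "(\<And>j. j \<in> J \<Longrightarrow> v j \<in> Rk k) \<Longrightarrow> (\<lambda>i. \<Sum>j\<in>J. a j * v j i) \<in> Rk k"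
  by (auto simp: Rk_def)

lemma Rk_mono: "y \<in> Rk k \<Longrightarrow> k \<le> n \<Longrightarrow> y \<in> Rk n"
  by (auto simp: Rk_def)

lemma Rk_limit:
  assumes "\<And>m. U m \<in> Rk n" and "\<And>i. (\<lambda>m. U m i) \<longlonglongrightarrow> u i"
  shows "u \<in> Rk n"
  unfolding Rk_def
proof (intro CollectI allI impI)
  fix i assume "n \<le> i"
  then have "(\<lambda>m. U m i) = (\<lambda>m. 0)" using assms(1) by (auto simp: Rk_def)
  then show "u i = 0" using assms(2)[of i] by (simp add: LIMSEQ_const_iff)
qed

lemma exists_coordwise_convergent_subseq:
  fixes U :: "nat \<Rightarrow> 'b::countable \<Rightarrow> real"
  assumes "\<And>m i. \<bar>U m i\<bar> \<le> B"
  obtains r u where "strict_mono r" and "\<And>i. (\<lambda>m. U (r m) i) \<longlonglongrightarrow> u i"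
proof -
  obtain r where r: "strict_mono r" and conv: "\<And>i. \<exists>l. (\<lambda>m. U (r m) i) \<longlonglongrightarrow> l"
    by (rule function_convergent_subsequence[of UNIV U B]) (use assms in auto)
  from conv obtain u where "\<And>i. (\<lambda>m. U (r m) i) \<longlonglongrightarrow> u i"
    by metis
  with r show thesis by (rule that)
qed

definition unit_vec :: "nat \<Rightarrow> nat \<Rightarrow> real" where
  "unit_vec j = (\<lambda>i. if i = j then 1 else 0)"

lemma unit_vec_Rk: "j < n \<Longrightarrow> unit_vec j \<in> Rk n"
  by (auto simp: unit_vec_def Rk_def)

lemma Rk_eq_sum_unit_vec:
  assumes "y \<in> Rk n" shows "y = (\<lambda>i. \<Sum>j<n. y j * unit_vec j i)"
proof
  fix i
  have "(\<Sum>j<n. y j * unit_vec j i) = (\<Sum>j<n. if j = i then y j else 0)"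
    by (rule sum.cong) (auto simp: unit_vec_def)
  also have "\<dots> = y i" using assms by (auto simp: Rk_def)
  finally show "y i = (\<Sum>j<n. y j * unit_vec j i)" by simp
qed

definition l1_norm :: "nat \<Rightarrow> (nat \<Rightarrow> real) \<Rightarrow> real" where
  "l1_norm n y = (\<Sum>j<n. \<bar>y j\<bar>)"

definition max_norm :: "nat \<Rightarrow> (nat \<Rightarrow> real) \<Rightarrow> real" where
  "max_norm n y = Max ((\<lambda>j. \<bar>y j\<bar>) ` {..<n})"

lemma l1_norm_nonneg: "0 \<le> l1_norm n y"
  unfolding l1_norm_def by (simp add: sum_nonneg)

lemma abs_le_l1_norm: "j < n \<Longrightarrow> \<bar>y j\<bar> \<le> l1_norm n y"
  unfolding l1_norm_def by (rule member_le_sum) auto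

lemma l1_norm_unit_vec: "j < n \<Longrightarrow> l1_norm n (unit_vec j) = 1"
  by (simp add: l1_norm_def unit_vec_def if_distrib[of abs] sum.delta cong: if_cong)

lemma l1_norm_scale: "l1_norm n (\<lambda>i. c * y i) = \<bar>c\<bar> * l1_norm n y"
  by (simp add: l1_norm_def abs_mult sum_distrib_left)

lemma l1_norm_divide: "l1_norm n (\<lambda>i. y i / c) = l1_norm n y / \<bar>c\<bar>"
  by (simp add: l1_norm_def abs_divide sum_divide_distrib)

lemma l1_norm_triangle: "l1_norm n (\<lambda>i. y i + z i) \<le> l1_norm n y + l1_norm n z"
  unfolding l1_norm_def by (simp add: sum.distrib[symmetric] sum_mono abs_triangle_ineq)

lemma l1_norm_eq_0_iff:
  assumes "y \<in> Rk n" shows "l1_norm n y = 0 \<longleftrightarrow> y = (\<lambda>_. 0)"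
proof
  assume "l1_norm n y = 0"
  then have "y i = 0" for i
    using abs_le_l1_norm[of i n y] assms by (cases "i < n") (auto simp: Rk_def)
  then show "y = (\<lambda>_. 0)" by auto
qed (simp add: l1_norm_def)

lemma tendsto_l1_norm:
  "(\<And>i. (\<lambda>m. U m i) \<longlonglongrightarrow> u i) \<Longrightarrow> (\<lambda>m. l1_norm n (U m)) \<longlonglongrightarrow> l1_norm n u"
  unfolding l1_norm_def by (intro tendsto_intros)

lemma abs_le_max_norm: "j < n \<Longrightarrow> \<bar>y j\<bar> \<le> max_norm n y"
  unfolding max_norm_def by (rule Max_ge) auto

lemma max_norm_nonneg: "n \<ge> 1 \<Longrightarrow> 0 \<le> max_norm n y"
  using abs_le_max_norm[of 0 n y] by simp

lemma max_norm_leI: "n \<ge> 1 \<Longrightarrow> (\<And>j. j < n \<Longrightarrow> \<bar>y j\<bar> \<le> b) \<Longrightarrow> max_norm n y \<le> b"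
  unfolding max_norm_def by (rule Max.boundedI) (auto simp: lessThan_empty_iff)

lemma max_norm_le_l1_norm: "n \<ge> 1 \<Longrightarrow> max_norm n y \<le> l1_norm n y"
  by (rule max_norm_leI) (auto intro: abs_le_l1_norm)

lemma l1_norm_le_max_norm: "l1_norm n y \<le> real n * max_norm n y"
proof -
  have "l1_norm n y \<le> (\<Sum>j<n. max_norm n y)"
    unfolding l1_norm_def by (rule sum_mono) (simp add: abs_le_max_norm)
  then show ?thesis by simp
qed

subsection \<open>Norms on \<open>R\<^sup>k\<close>\<close>

context
  fixes k :: nat and N :: "(nat \<Rightarrow> real) \<Rightarrow> real"
  assumes N: "is_norm_on k N"
begin

lemma is_norm_on_nonneg: "y \<in> Rk k \<Longrightarrow> 0 \<le> N y"
  and is_norm_on_eq_0_iff: "y \<in> Rk k \<Longrightarrow> N y = 0 \<longleftrightarrow> y = (\<lambda>_. 0)"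
  and is_norm_on_scale: "y \<in> Rk k \<Longrightarrow> N (\<lambda>i. c * y i) = \<bar>c\<bar> * N y"
  and is_norm_on_triangle: "y \<in> Rk k \<Longrightarrow> z \<in> Rk k \<Longrightarrow> N (\<lambda>i. y i + z i) \<le> N y + N z"
  using N unfolding is_norm_on_def by auto

lemma is_norm_on_zero: "N (\<lambda>_. 0) = 0"
  using is_norm_on_eq_0_iff[OF Rk_zero] by simp

lemma is_norm_on_divide: "y \<in> Rk k \<Longrightarrow> N (\<lambda>i. y i / c) = N y / \<bar>c\<bar>"
  using is_norm_on_scale[of y "1 / c"] by (simp add: abs_inverse)

lemma is_norm_on_minus_commute:
  assumes "y \<in> Rk k" "z \<in> Rk k"
  shows "N (\<lambda>i. y i - z i) = N (\<lambda>i. z i - y i)"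
  using is_norm_on_scale[OF Rk_diff[OF assms], of "-1"] by simp

lemma is_norm_on_triangle_diff:
  assumes "y \<in> Rk k" "z \<in> Rk k"
  shows "N y \<le> N z + N (\<lambda>i. y i - z i)"
  using is_norm_on_triangle[OF assms(2) Rk_diff[OF assms]] by simp

lemma is_norm_on_sum_le:
  assumes "finite J" and "\<And>j. j \<in> J \<Longrightarrow> v j \<in> Rk k"
  shows "N (\<lambda>i. \<Sum>j\<in>J. a j * v j i) \<le> (\<Sum>j\<in>J. \<bar>a j\<bar> * N (v j))"
  using assms
proof (induction J rule: finite_induct)
  case empty
  then show ?case using is_norm_on_zero by simp
next
  case (insert x F)
  have "v x \<in> Rk k" and "(\<lambda>i. \<Sum>j\<in>F. a j * v j i) \<in> Rk k"
    using insert.prems by auto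
  then have "N (\<lambda>i. a x * v x i + (\<Sum>j\<in>F. a j * v j i))
      \<le> N (\<lambda>i. a x * v x i) + N (\<lambda>i. \<Sum>j\<in>F. a j * v j i)"
    by (intro is_norm_on_triangle) auto
  also have "\<dots> \<le> \<bar>a x\<bar> * N (v x) + (\<Sum>j\<in>F. \<bar>a j\<bar> * N (v j))"
    using is_norm_on_scale \<open>v x \<in> Rk k\<close> insert.IH insert.prems by auto
  finally show ?case using insert.hyps by simp
qed

lemma is_norm_on_le_l1_norm:
  obtains C where "C > 0" and "\<And>y. y \<in> Rk k \<Longrightarrow> N y \<le> C * l1_norm k y"
proof
  define C where "C = 1 + (\<Sum>j<k. N (unit_vec j))"
  have "0 \<le> (\<Sum>j<k. N (unit_vec j))"
    by (intro sum_nonneg is_norm_on_nonneg unit_vec_Rk) simp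
  then show "C > 0" by (simp add: C_def)
  fix y assume y: "y \<in> Rk k"
  have "N y = N (\<lambda>i. \<Sum>j<k. y j * unit_vec j i)"
    using Rk_eq_sum_unit_vec[OF y] by simp
  also have "\<dots> \<le> (\<Sum>j<k. \<bar>y j\<bar> * N (unit_vec j))"
    by (rule is_norm_on_sum_le) (auto intro: unit_vec_Rk)
  also have "\<dots> \<le> (\<Sum>j<k. l1_norm k y * N (unit_vec j))"
    by (intro sum_mono mult_right_mono abs_le_l1_norm is_norm_on_nonneg unit_vec_Rk) auto
  also have "\<dots> = l1_norm k y * (\<Sum>j<k. N (unit_vec j))"
    by (simp add: sum_distrib_left)
  also have "\<dots> \<le> C * l1_norm k y"
    unfolding C_def using l1_norm_nonneg[of k y] by (simp add: algebra_simps)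
  finally show "N y \<le> C * l1_norm k y" .
qed

lemma is_norm_on_limit_le:
  assumes U: "\<And>m. U m \<in> Rk k" and lim: "\<And>i. (\<lambda>m. U m i) \<longlonglongrightarrow> u i"
    and B: "B \<longlonglongrightarrow> b" and NB: "\<And>m. N (U m) \<le> B m"
  shows "N u \<le> b"
proof -
  obtain C where C: "\<And>y. y \<in> Rk k \<Longrightarrow> N y \<le> C * l1_norm k y"
    by (metis is_norm_on_le_l1_norm)
  have u: "u \<in> Rk k" by (rule Rk_limit[OF U lim])
  have "N u \<le> B m + C * l1_norm k (\<lambda>i. u i - U m i)" for m
    using is_norm_on_triangle_diff[OF u U, of m] NB[of m] C[OF Rk_diff[OF u U[of m]]] by linarith
  moreover have "(\<lambda>m. l1_norm k (\<lambda>i. u i - U m i)) \<longlonglongrightarrow> l1_norm k (\<lambda>i. u i - u i)"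
    by (intro tendsto_l1_norm tendsto_intros lim)
  then have "(\<lambda>m. B m + C * l1_norm k (\<lambda>i. u i - U m i)) \<longlonglongrightarrow> b + C * 0"
    by (intro tendsto_intros B) (simp add: l1_norm_def)
  ultimately show ?thesis by (intro LIMSEQ_le_const) auto
qed

lemma is_norm_on_not_tendsto_0_on_l1_sphere:
  assumes U: "\<And>m. U m \<in> Rk k" and U1: "\<And>m. l1_norm k (U m) = 1"
    and UN: "\<And>m. N (U m) \<le> inverse (real (Suc m))"
  shows False
proof -
  have "\<bar>U m i\<bar> \<le> 1" for m i
    using abs_le_l1_norm[of i k "U m"] U[of m] U1[of m] by (cases "i < k") (auto simp: Rk_def)
  then obtain r u where r: "strict_mono r" and u: "\<And>i. (\<lambda>m. U (r m) i) \<longlonglongrightarrow> u i"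
    using exists_coordwise_convergent_subseq[of U 1] by blast
  have uR: "u \<in> Rk k" by (rule Rk_limit[OF U u])
  have "(\<lambda>m. l1_norm k (U (r m))) \<longlonglongrightarrow> l1_norm k u" by (rule tendsto_l1_norm[OF u])
  then have "l1_norm k u = 1" using U1 by (simp add: LIMSEQ_const_iff)
  moreover have "(\<lambda>m. inverse (real (Suc (r m)))) \<longlonglongrightarrow> 0"
    using LIMSEQ_subseq_LIMSEQ[OF LIMSEQ_inverse_real_of_nat r] by (simp add: o_def)
  then have "N u \<le> 0" by (rule is_norm_on_limit_le[OF U u _ UN])
  then have "u = (\<lambda>_. 0)" using is_norm_on_nonneg[OF uR] is_norm_on_eq_0_iff[OF uR] by simp
  ultimately show False by (simp add: l1_norm_def)
qed

lemma is_norm_on_ge_l1_norm: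
  obtains c where "c > 0" and "\<And>y. y \<in> Rk k \<Longrightarrow> c * l1_norm k y \<le> N y"
proof -
  have "\<exists>c>0. \<forall>y\<in>Rk k. c * l1_norm k y \<le> N y"
  proof (rule ccontr)
    assume "\<not> ?thesis"
    then have "\<exists>y\<in>Rk k. N y < inverse (real (Suc m)) * l1_norm k y" for m
      by (auto simp: not_le dest: spec[of _ "inverse (real (Suc m))"])
    then obtain Y where Y: "\<And>m. Y m \<in> Rk k"
      and YN: "\<And>m. N (Y m) < inverse (real (Suc m)) * l1_norm k (Y m)"
      by metis
    have pos: "l1_norm k (Y m) > 0" for m
    proof -
      have "0 < inverse (real (Suc m)) * l1_norm k (Y m)"
        using YN[of m] is_norm_on_nonneg[OF Y, of m] by linarith
      then show ?thesis by (simp add: zero_less_mult_iff)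
    qed
    show False
    proof (rule is_norm_on_not_tendsto_0_on_l1_sphere)
      fix m
      show "(\<lambda>i. Y m i / l1_norm k (Y m)) \<in> Rk k" using Y by simp
      show "l1_norm k (\<lambda>i. Y m i / l1_norm k (Y m)) = 1"
        using pos[of m] by (simp add: l1_norm_divide)
      show "N (\<lambda>i. Y m i / l1_norm k (Y m)) \<le> inverse (real (Suc m))"
        using YN[of m] pos[of m] is_norm_on_divide[OF Y, of m "l1_norm k (Y m)"]
        by (simp add: divide_le_eq mult.commute)
    qed
  qed
  then show ?thesis using that by blast
qed

end

subsection \<open>Comparing fixed Lipschitz widths\<close>

lemma le_INF_plus_ennreal:
  fixes x :: ennreal
  assumes "\<And>z. z \<in> Z \<Longrightarrow> x \<le> g z + ennreal d"
  shows "x \<le> (INF z\<in>Z. g z) + ennreal d"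
proof -
  have "x - ennreal d \<le> g z" if "z \<in> Z" for z
    using assms[OF that] by (simp add: add.commute ennreal_minus_le_iff)
  then have "x - ennreal d \<le> (INF z\<in>Z. g z)" by (rule INF_greatest)
  then show ?thesis
    by (metis add.commute add_right_mono diff_add_self_ennreal dual_order.trans ennreal_minus_le_iff
        le_iff_add)
qed

lemma INF_dist_le_INF_dist_plus:
  fixes f :: "'a::real_normed_vector"
  assumes "\<forall>z\<in>Z. \<exists>y\<in>Y. norm (\<Psi> y - \<Phi> z) \<le> d"
  shows "(INF y\<in>Y. ennreal (norm (f - \<Psi> y))) \<le> (INF z\<in>Z. ennreal (norm (f - \<Phi> z))) + ennreal d"
proof (rule le_INF_plus_ennreal)
  fix z assume "z \<in> Z"
  then obtain y where y: "y \<in> Y" and yz: "norm (\<Psi> y - \<Phi> z) \<le> d"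
    using assms by blast
  have "norm (f - \<Psi> y) \<le> norm (f - \<Phi> z) + d"
    using norm_triangle_ineq[of "f - \<Phi> z" "\<Phi> z - \<Psi> y"] yz by (simp add: norm_minus_commute)
  moreover have "0 \<le> d" using yz by (meson norm_ge_zero order.trans)
  ultimately have "ennreal (norm (f - \<Psi> y)) \<le> ennreal (norm (f - \<Phi> z)) + ennreal d"
    by (simp add: ennreal_leI flip: ennreal_plus)
  then show "(INF y\<in>Y. ennreal (norm (f - \<Psi> y))) \<le> ennreal (norm (f - \<Phi> z)) + ennreal d"
    by (meson INF_lower y order.trans)
qed

lemma fixed_lip_width_le_approx:
  fixes K :: "'a::real_normed_vector set"
  assumes approx: "\<And>\<Phi>. \<Phi> \<in> (lip_maps \<gamma> k N :: ((nat \<Rightarrow> real) \<Rightarrow> 'a) set) \<Longrightarrow>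
      \<exists>\<Psi> \<in> lip_maps \<gamma> k' N'. \<forall>z\<in>unit_ball_Y k N. \<exists>y\<in>unit_ball_Y k' N'. norm (\<Psi> y - \<Phi> z) \<le> d"
  shows "fixed_lip_width \<gamma> K k' N' \<le> fixed_lip_width \<gamma> K k N + ennreal d"
  unfolding fixed_lip_width_def
proof (rule le_INF_plus_ennreal)
  fix \<Phi> :: "(nat \<Rightarrow> real) \<Rightarrow> 'a" assume "\<Phi> \<in> lip_maps \<gamma> k N"
  then obtain \<Psi> where \<Psi>: "\<Psi> \<in> lip_maps \<gamma> k' N'"
    and close: "\<forall>z\<in>unit_ball_Y k N. \<exists>y\<in>unit_ball_Y k' N'. norm (\<Psi> y - \<Phi> z) \<le> d"
    using approx by blast
  have "(SUP f\<in>K. INF y\<in>unit_ball_Y k' N'. ennreal (norm (f - \<Psi> y)))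
      \<le> (SUP f\<in>K. INF z\<in>unit_ball_Y k N. ennreal (norm (f - \<Phi> z))) + ennreal d"
  proof (rule SUP_least)
    fix f assume "f \<in> K"
    then show "(INF y\<in>unit_ball_Y k' N'. ennreal (norm (f - \<Psi> y)))
        \<le> (SUP f\<in>K. INF z\<in>unit_ball_Y k N. ennreal (norm (f - \<Phi> z))) + ennreal d"
      using INF_dist_le_INF_dist_plus[OF close, of f] by (meson SUP_upper add_right_mono order.trans)
  qed
  then show "(INF \<Psi>\<in>lip_maps \<gamma> k' N'. SUP f\<in>K. INF y\<in>unit_ball_Y k' N'. ennreal (norm (f - \<Psi> y)))
      \<le> (SUP f\<in>K. INF z\<in>unit_ball_Y k N. ennreal (norm (f - \<Phi> z))) + ennreal d"
    by (meson INF_lower \<Psi> order.trans)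
qed

lemma fixed_lip_width_le_comp:
  fixes K :: "'a::real_normed_vector set"
  assumes "\<gamma> \<ge> 0"
    and into: "T ` unit_ball_Y k' N' \<subseteq> unit_ball_Y k N"
    and onto: "unit_ball_Y k N \<subseteq> T ` unit_ball_Y k' N'"
    and contraction: "\<And>y y'. y \<in> unit_ball_Y k' N' \<Longrightarrow> y' \<in> unit_ball_Y k' N' \<Longrightarrow>
      N (\<lambda>i. T y i - T y' i) \<le> N' (\<lambda>i. y i - y' i)"
  shows "fixed_lip_width \<gamma> K k' N' \<le> fixed_lip_width \<gamma> K k N"
proof -
  have "fixed_lip_width \<gamma> K k' N' \<le> fixed_lip_width \<gamma> K k N + ennreal 0"
  proof (rule fixed_lip_width_le_approx)
    fix \<Phi> :: "(nat \<Rightarrow> real) \<Rightarrow> 'a" assume \<Phi>: "\<Phi> \<in> lip_maps \<gamma> k N"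
    have "\<Phi> \<circ> T \<in> lip_maps \<gamma> k' N'"
      unfolding lip_maps_def mem_Collect_eq
    proof (intro ballI)
      fix y y' assume y: "y \<in> unit_ball_Y k' N'" and y': "y' \<in> unit_ball_Y k' N'"
      have "norm (\<Phi> (T y) - \<Phi> (T y')) \<le> \<gamma> * N (\<lambda>i. T y i - T y' i)"
        using \<Phi> into y y' unfolding lip_maps_def by blast
      also have "\<dots> \<le> \<gamma> * N' (\<lambda>i. y i - y' i)"
        using contraction[OF y y'] \<open>\<gamma> \<ge> 0\<close> by (rule mult_left_mono)
      finally show "norm ((\<Phi> \<circ> T) y - (\<Phi> \<circ> T) y') \<le> \<gamma> * N' (\<lambda>i. y i - y' i)" by simp
    qed
    moreover have "\<forall>z\<in>unit_ball_Y k N. \<exists>y\<in>unit_ball_Y k' N'. norm ((\<Phi> \<circ> T) y - \<Phi> z) \<le> 0"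
      using onto by fastforce
    ultimately show "\<exists>\<Psi>\<in>lip_maps \<gamma> k' N'.
        \<forall>z\<in>unit_ball_Y k N. \<exists>y\<in>unit_ball_Y k' N'. norm (\<Psi> y - \<Phi> z) \<le> 0" by blast
  qed
  then show ?thesis by simp
qed

lemma divide_mem_unit_ball_Y:
  assumes A: "is_norm_on n A" and "c > 0" and AB: "\<And>y. y \<in> Rk n \<Longrightarrow> A y \<le> c * B y"
    and y: "y \<in> unit_ball_Y n B"
  shows "(\<lambda>i. y i / c) \<in> unit_ball_Y n A"
proof -
  have "y \<in> Rk n" and "B y \<le> 1" using y by (auto simp: unit_ball_Y_def)
  moreover have "A (\<lambda>i. y i / c) \<le> B y"
    using AB[OF \<open>y \<in> Rk n\<close>] is_norm_on_divide[OF A \<open>y \<in> Rk n\<close>] \<open>c > 0\<close>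
    by (simp add: divide_le_eq mult.commute)
  ultimately show ?thesis by (simp add: unit_ball_Y_def)
qed

lemma lip_maps_comp_divide:
  assumes A: "is_norm_on n A" and "c > 0" and "\<gamma> \<ge> 0"
    and AB: "\<And>y. y \<in> Rk n \<Longrightarrow> A y \<le> c * B y" and \<Phi>: "\<Phi> \<in> lip_maps \<gamma> n A"
  shows "(\<lambda>y. \<Phi> (\<lambda>i. y i / c)) \<in> lip_maps \<gamma> n B"
  unfolding lip_maps_def mem_Collect_eq
proof (intro ballI)
  fix y y' assume y: "y \<in> unit_ball_Y n B" and y': "y' \<in> unit_ball_Y n B"
  then have yy': "(\<lambda>i. y i - y' i) \<in> Rk n" by (simp add: unit_ball_Y_def)
  have "norm (\<Phi> (\<lambda>i. y i / c) - \<Phi> (\<lambda>i. y' i / c)) \<le> \<gamma> * A (\<lambda>i. y i / c - y' i / c)"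
    using \<Phi> divide_mem_unit_ball_Y[OF A \<open>c > 0\<close> AB] y y' unfolding lip_maps_def by blast
  also have "(\<lambda>i. y i / c - y' i / c) = (\<lambda>i. (y i - y' i) / c)"
    by (simp add: diff_divide_distrib)
  also have "A \<dots> \<le> B (\<lambda>i. y i - y' i)"
    using AB[OF yy'] is_norm_on_divide[OF A yy'] \<open>c > 0\<close> by (simp add: divide_le_eq mult.commute)
  finally show "norm (\<Phi> (\<lambda>i. y i / c) - \<Phi> (\<lambda>i. y' i / c)) \<le> \<gamma> * B (\<lambda>i. y i - y' i)"
    using \<open>\<gamma> \<ge> 0\<close> by (simp add: mult_left_mono order_trans)
qed

text \<open>The rescaled map \<open>y \<mapsto> \<Phi> (y / c)\<close> approximates \<open>\<Phi> z\<close> by its value at \<open>z / c\<close>, namely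
  \<open>\<Phi> (z / c\<^sup>2)\<close>.\<close>

lemma fixed_lip_width_le_equiv_norm:
  fixes K :: "'a::real_normed_vector set"
  assumes A: "is_norm_on n A" and B: "is_norm_on n B" and "c \<ge> 1" and "\<gamma> \<ge> 0"
    and AB: "\<And>y. y \<in> Rk n \<Longrightarrow> A y \<le> c * B y" and BA: "\<And>y. y \<in> Rk n \<Longrightarrow> B y \<le> c * A y"
  shows "fixed_lip_width \<gamma> K n B \<le> fixed_lip_width \<gamma> K n A + ennreal (\<gamma> * (1 - 1 / c\<^sup>2))"
proof (rule fixed_lip_width_le_approx)
  fix \<Phi> :: "(nat \<Rightarrow> real) \<Rightarrow> 'a" assume \<Phi>: "\<Phi> \<in> lip_maps \<gamma> n A"
  have "c > 0" using \<open>c \<ge> 1\<close> by simp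
  have close: "norm (\<Phi> (\<lambda>i. z i / c / c) - \<Phi> z) \<le> \<gamma> * (1 - 1 / c\<^sup>2)"
    if z: "z \<in> unit_ball_Y n A" for z
  proof -
    have zR: "z \<in> Rk n" and "A z \<le> 1" using z by (auto simp: unit_ball_Y_def)
    have "0 \<le> 1 - 1 / c\<^sup>2" and "1 / c\<^sup>2 \<le> 1"
      using \<open>c \<ge> 1\<close> by (simp_all add: one_le_power)
    have "(\<lambda>i. z i / c / c) \<in> unit_ball_Y n A"
      by (intro divide_mem_unit_ball_Y[OF A \<open>c > 0\<close> AB] divide_mem_unit_ball_Y[OF B \<open>c > 0\<close> BA] z)
    then have "norm (\<Phi> (\<lambda>i. z i / c / c) - \<Phi> z) \<le> \<gamma> * A (\<lambda>i. z i / c / c - z i)"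
      using \<Phi> z unfolding lip_maps_def by blast
    also have "(\<lambda>i. z i / c / c - z i) = (\<lambda>i. (1 / c\<^sup>2 - 1) * z i)"
      by (auto simp: field_simps power2_eq_square)
    also have "A \<dots> = (1 - 1 / c\<^sup>2) * A z"
      using is_norm_on_scale[OF A zR] \<open>1 / c\<^sup>2 \<le> 1\<close> by simp
    also have "\<gamma> * \<dots> \<le> \<gamma> * (1 - 1 / c\<^sup>2)"
      using \<open>A z \<le> 1\<close> \<open>0 \<le> 1 - 1 / c\<^sup>2\<close> \<open>\<gamma> \<ge> 0\<close>
      by (simp add: mult_left_mono mult_right_le_one_le is_norm_on_nonneg[OF A zR])
    finally show ?thesis .
  qed
  show "\<exists>\<Psi>\<in>lip_maps \<gamma> n B.
      \<forall>z\<in>unit_ball_Y n A. \<exists>y\<in>unit_ball_Y n B. norm (\<Psi> y - \<Phi> z) \<le> \<gamma> * (1 - 1 / c\<^sup>2)"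
  proof (rule bexI[OF _ lip_maps_comp_divide[OF A \<open>c > 0\<close> \<open>\<gamma> \<ge> 0\<close> AB \<Phi>]], intro ballI)
    fix z assume z: "z \<in> unit_ball_Y n A"
    show "\<exists>y\<in>unit_ball_Y n B. norm (\<Phi> (\<lambda>i. y i / c) - \<Phi> z) \<le> \<gamma> * (1 - 1 / c\<^sup>2)"
      using close[OF z] by (intro bexI[OF _ divide_mem_unit_ball_Y[OF B \<open>c > 0\<close> BA z]]) simp
  qed
qed

subsection \<open>Passing from \<open>R\<^sup>k\<close> to \<open>R\<^sup>n\<close>\<close>

definition restrict_coords :: "nat \<Rightarrow> (nat \<Rightarrow> real) \<Rightarrow> nat \<Rightarrow> real" where
  "restrict_coords k y = (\<lambda>i. if i < k then y i else 0)"

lemma Rk_restrict_coords [simp]: "restrict_coords k y \<in> Rk k"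
  by (simp add: restrict_coords_def Rk_def)

lemma restrict_coords_scale: "restrict_coords k (\<lambda>i. c * y i) = (\<lambda>i. c * restrict_coords k y i)"
  and restrict_coords_add:
    "restrict_coords k (\<lambda>i. y i + z i) = (\<lambda>i. restrict_coords k y i + restrict_coords k z i)"
  and restrict_coords_diff:
    "restrict_coords k (\<lambda>i. y i - z i) = (\<lambda>i. restrict_coords k y i - restrict_coords k z i)"
  by (simp_all add: restrict_coords_def fun_eq_iff)

lemma restrict_coords_Rk: "y \<in> Rk k \<Longrightarrow> restrict_coords k y = y"
  by (auto simp: restrict_coords_def Rk_def fun_eq_iff)

definition extend_norm :: "nat \<Rightarrow> nat \<Rightarrow> ((nat \<Rightarrow> real) \<Rightarrow> real) \<Rightarrow> (nat \<Rightarrow> real) \<Rightarrow> real" where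
  "extend_norm k n N y = N (restrict_coords k y) + (\<Sum>i\<in>{k..<n}. \<bar>y i\<bar>)"

context
  fixes k n :: nat and N :: "(nat \<Rightarrow> real) \<Rightarrow> real"
  assumes N: "is_norm_on k N"
begin

lemma restrict_coords_le_extend_norm: "N (restrict_coords k y) \<le> extend_norm k n N y"
  by (simp add: extend_norm_def sum_nonneg)

lemma extend_norm_eq_0_iff:
  assumes y: "y \<in> Rk n"
  shows "extend_norm k n N y = 0 \<longleftrightarrow> y = (\<lambda>_. 0)"
proof
  assume "extend_norm k n N y = 0"
  moreover have "0 \<le> N (restrict_coords k y)" and "0 \<le> (\<Sum>i\<in>{k..<n}. \<bar>y i\<bar>)"
    by (simp_all add: is_norm_on_nonneg[OF N] sum_nonneg)
  ultimately have "N (restrict_coords k y) = 0" and "(\<Sum>i\<in>{k..<n}. \<bar>y i\<bar>) = 0"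
    unfolding extend_norm_def by linarith+
  then have head: "restrict_coords k y = (\<lambda>_. 0)" and tail: "\<forall>i\<in>{k..<n}. y i = 0"
    using is_norm_on_eq_0_iff[OF N Rk_restrict_coords] by (auto simp: sum_nonneg_eq_0_iff)
  have "y i = 0" for i
  proof (cases "i < k")
    case True
    then show ?thesis using fun_cong[OF head, of i] by (simp add: restrict_coords_def)
  next
    case False
    then show ?thesis using tail y by (cases "i < n") (auto simp: Rk_def)
  qed
  then show "y = (\<lambda>_. 0)" by auto
qed (simp add: extend_norm_def restrict_coords_def is_norm_on_zero[OF N])

lemma is_norm_on_extend_norm: "is_norm_on n (extend_norm k n N)"
  unfolding is_norm_on_def
proof (intro conjI ballI allI)
  fix y :: "nat \<Rightarrow> real"
  show "0 \<le> extend_norm k n N y"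
    by (simp add: extend_norm_def is_norm_on_nonneg[OF N] sum_nonneg)
  show "y \<in> Rk n \<Longrightarrow> extend_norm k n N y = 0 \<longleftrightarrow> y = (\<lambda>_. 0)"
    by (rule extend_norm_eq_0_iff)
next
  fix c :: real and y :: "nat \<Rightarrow> real"
  show "extend_norm k n N (\<lambda>i. c * y i) = \<bar>c\<bar> * extend_norm k n N y"
    using is_norm_on_scale[OF N Rk_restrict_coords, of c y]
    by (simp add: extend_norm_def restrict_coords_scale abs_mult sum_distrib_left distrib_left)
next
  fix y z :: "nat \<Rightarrow> real"
  have "(\<Sum>i\<in>{k..<n}. \<bar>y i + z i\<bar>) \<le> (\<Sum>i\<in>{k..<n}. \<bar>y i\<bar>) + (\<Sum>i\<in>{k..<n}. \<bar>z i\<bar>)"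
    by (simp add: sum.distrib[symmetric] sum_mono abs_triangle_ineq)
  then show "extend_norm k n N (\<lambda>i. y i + z i) \<le> extend_norm k n N y + extend_norm k n N z"
    using is_norm_on_triangle[OF N Rk_restrict_coords Rk_restrict_coords, of y z]
    unfolding extend_norm_def restrict_coords_add by linarith
qed

lemma fixed_lip_width_extend_norm_le:
  assumes "k \<le> n" and "\<gamma> \<ge> 0"
  shows "fixed_lip_width \<gamma> K n (extend_norm k n N) \<le> fixed_lip_width \<gamma> K k N"
proof (rule fixed_lip_width_le_comp[where T = "restrict_coords k"])
  show "restrict_coords k ` unit_ball_Y n (extend_norm k n N) \<subseteq> unit_ball_Y k N"
    using restrict_coords_le_extend_norm by (force simp: unit_ball_Y_def intro: order_trans)
  show "unit_ball_Y k N \<subseteq> restrict_coords k ` unit_ball_Y n (extend_norm k n N)"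
  proof
    fix z assume z: "z \<in> unit_ball_Y k N"
    then have "z \<in> Rk k" by (simp add: unit_ball_Y_def)
    then have "extend_norm k n N z = N z"
      by (simp add: extend_norm_def restrict_coords_Rk Rk_def)
    then have "z \<in> unit_ball_Y n (extend_norm k n N)"
      using z Rk_mono[OF \<open>z \<in> Rk k\<close> \<open>k \<le> n\<close>] by (simp add: unit_ball_Y_def)
    then show "z \<in> restrict_coords k ` unit_ball_Y n (extend_norm k n N)"
      by (rule rev_image_eqI) (simp add: restrict_coords_Rk \<open>z \<in> Rk k\<close>)
  qed
  show "N (\<lambda>i. restrict_coords k y i - restrict_coords k y' i) \<le> extend_norm k n N (\<lambda>i. y i - y' i)"
    for y y'
    using restrict_coords_le_extend_norm[of "\<lambda>i. y i - y' i"] by (simp add: restrict_coords_diff)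
qed fact

end

subsection \<open>Auerbach bases\<close>

definition col_mat :: "nat \<Rightarrow> (nat \<Rightarrow> nat \<Rightarrow> real) \<Rightarrow> real mat" where
  "col_mat n v = mat n n (\<lambda>(i, j). v j i)"

definition det_cols :: "nat \<Rightarrow> (nat \<Rightarrow> nat \<Rightarrow> real) \<Rightarrow> real" where
  "det_cols n v = det (col_mat n v)"

lemma col_mat_carrier [simp]: "col_mat n v \<in> carrier_mat n n"
  and dim_col_mat [simp]: "dim_row (col_mat n v) = n" "dim_col (col_mat n v) = n"
  and col_mat_index [simp]: "i < n \<Longrightarrow> j < n \<Longrightarrow> col_mat n v $$ (i, j) = v j i"
  by (simp_all add: col_mat_def)

lemma det_cols_expand:
  "det_cols n v = (\<Sum>p | p permutes {0..<n}. of_int (sign p) * (\<Prod>i=0..<n. v (p i) i))"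
  unfolding det_cols_def det_def by (auto intro!: sum.cong prod.cong simp: permutes_in_image)

lemma tendsto_det_cols:
  "(\<And>j i. (\<lambda>m. V m j i) \<longlonglongrightarrow> v j i) \<Longrightarrow> (\<lambda>m. det_cols n (V m)) \<longlonglongrightarrow> det_cols n v"
  unfolding det_cols_expand by (intro tendsto_intros)

lemma abs_det_cols_le:
  assumes B: "\<And>i j. i < n \<Longrightarrow> j < n \<Longrightarrow> \<bar>v j i\<bar> \<le> B"
  shows "\<bar>det_cols n v\<bar> \<le> fact n * B ^ n"
proof -
  have "\<bar>det_cols n v\<bar> \<le> (\<Sum>p | p permutes {0..<n}. \<bar>of_int (sign p) * (\<Prod>i=0..<n. v (p i) i)\<bar>)"
    unfolding det_cols_expand by (rule sum_abs)
  also have "\<dots> \<le> (\<Sum>p | p permutes {0..<n}. B ^ n)"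
  proof (rule sum_mono)
    fix p assume "p \<in> {p. p permutes {0..<n}}"
    then have "(\<Prod>i=0..<n. \<bar>v (p i) i\<bar>) \<le> (\<Prod>i=0..<n. B)"
      using B by (intro prod_mono) (auto simp: permutes_in_image)
    then show "\<bar>of_int (sign p) * (\<Prod>i=0..<n. v (p i) i)\<bar> \<le> B ^ n"
      by (simp add: sign_def abs_prod)
  qed
  also have "\<dots> = fact n * B ^ n"
    using card_permutations[of "{0..<n}" n] by simp
  finally show ?thesis .
qed

lemma det_cols_diag: "det_cols n (\<lambda>j i. if i = j \<and> j < n then t else 0) = t ^ n"
proof -
  have "col_mat n (\<lambda>j i. if i = j \<and> j < n then t else 0) = t \<cdot>\<^sub>m 1\<^sub>m n"
    by (rule eq_matI) auto
  then show ?thesis unfolding det_cols_def by simp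
qed

lemma sum_cols_mult_adj_mat:
  assumes "i < n" and "l < n"
  shows "(\<Sum>j<n. v j i * adj_mat (col_mat n v) $$ (j, l)) = (if i = l then det_cols n v else 0)"
proof -
  have "(col_mat n v * adj_mat (col_mat n v)) $$ (i, l) = (det_cols n v \<cdot>\<^sub>m 1\<^sub>m n) $$ (i, l)"
    using adj_mat(2)[OF col_mat_carrier] by (simp add: det_cols_def)
  moreover have "(col_mat n v * adj_mat (col_mat n v)) $$ (i, l)
      = (\<Sum>j<n. v j i * adj_mat (col_mat n v) $$ (j, l))"
    using adj_mat(1)[OF col_mat_carrier, of n v] assms
    by (auto simp: scalar_prod_def lessThan_atLeast0 intro!: sum.cong)
  ultimately show ?thesis using assms by simp
qed

lemma sum_adj_mat_mult_cols:
  assumes "j < n" and "l < n"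
  shows "(\<Sum>i<n. adj_mat (col_mat n v) $$ (j, i) * v l i) = (if j = l then det_cols n v else 0)"
proof -
  have "(adj_mat (col_mat n v) * col_mat n v) $$ (j, l) = (det_cols n v \<cdot>\<^sub>m 1\<^sub>m n) $$ (j, l)"
    using adj_mat(3)[OF col_mat_carrier] by (simp add: det_cols_def)
  moreover have "(adj_mat (col_mat n v) * col_mat n v) $$ (j, l)
      = (\<Sum>i<n. adj_mat (col_mat n v) $$ (j, i) * v l i)"
    using adj_mat(1)[OF col_mat_carrier, of n v] assms
    by (auto simp: scalar_prod_def lessThan_atLeast0 intro!: sum.cong)
  ultimately show ?thesis using assms by simp
qed

lemma det_cols_upd_eq_sum_adj_mat:
  assumes j: "j < n"
  shows "det_cols n (v(j := x)) = (\<Sum>i<n. adj_mat (col_mat n v) $$ (j, i) * x i)"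
proof -
  let ?A = "col_mat n v" and ?B = "col_mat n (v(j := x))"
  have minors: "mat_delete ?B i j = mat_delete ?A i j" for i
    by (rule eq_matI) (auto simp: mat_delete_def)
  have "det_cols n (v(j := x)) = (\<Sum>i<n. ?B $$ (i, j) * cofactor ?B i j)"
    unfolding det_cols_def by (rule laplace_expansion_column[OF col_mat_carrier j])
  also have "\<dots> = (\<Sum>i<n. x i * cofactor ?A i j)"
    using j by (auto intro!: sum.cong simp: cofactor_def minors)
  also have "\<dots> = (\<Sum>i<n. adj_mat ?A $$ (j, i) * x i)"
    using j by (auto intro!: sum.cong simp: adj_mat_def mult.commute)
  finally show ?thesis .
qed

lemma det_cols_upd_divide:
  "j < n \<Longrightarrow> det_cols n (v(j := (\<lambda>i. x i / t))) = det_cols n (v(j := x)) / t"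
  by (simp add: det_cols_upd_eq_sum_adj_mat sum_divide_distrib)

definition lin_comb :: "nat \<Rightarrow> (nat \<Rightarrow> nat \<Rightarrow> real) \<Rightarrow> (nat \<Rightarrow> real) \<Rightarrow> nat \<Rightarrow> real" where
  "lin_comb n v y = (\<lambda>i. \<Sum>j<n. y j * v j i)"

lemma Rk_lin_comb: "(\<And>j. j < n \<Longrightarrow> v j \<in> Rk k) \<Longrightarrow> lin_comb n v y \<in> Rk k"
  unfolding lin_comb_def by (rule Rk_sum) simp

lemma lin_comb_scale: "lin_comb n v (\<lambda>j. c * y j) = (\<lambda>i. c * lin_comb n v y i)"
  and lin_comb_add: "lin_comb n v (\<lambda>j. y j + z j) = (\<lambda>i. lin_comb n v y i + lin_comb n v z i)"
  and lin_comb_diff: "lin_comb n v (\<lambda>j. y j - z j) = (\<lambda>i. lin_comb n v y i - lin_comb n v z i)"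
  by (simp_all add: lin_comb_def sum_distrib_left mult_ac sum.distrib[symmetric]
      sum_subtractf[symmetric] algebra_simps)

definition cramer_coord :: "nat \<Rightarrow> (nat \<Rightarrow> nat \<Rightarrow> real) \<Rightarrow> (nat \<Rightarrow> real) \<Rightarrow> nat \<Rightarrow> real" where
  "cramer_coord n v x j = (if j < n then det_cols n (v(j := x)) / det_cols n v else 0)"

lemma Rk_cramer_coord: "cramer_coord n v x \<in> Rk n"
  by (simp add: cramer_coord_def Rk_def)

lemma lin_comb_cramer_coord:
  assumes d: "det_cols n v \<noteq> 0" and x: "x \<in> Rk n" and v: "\<And>j. j < n \<Longrightarrow> v j \<in> Rk n"
  shows "lin_comb n v (cramer_coord n v x) = x"
proof
  fix i
  let ?adj = "adj_mat (col_mat n v)"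
  show "lin_comb n v (cramer_coord n v x) i = x i"
  proof (cases "i < n")
    case True
    have "lin_comb n v (cramer_coord n v x) i
        = (\<Sum>j<n. \<Sum>l<n. v j i * ?adj $$ (j, l) * x l) / det_cols n v"
      by (simp add: lin_comb_def cramer_coord_def det_cols_upd_eq_sum_adj_mat sum_divide_distrib
          sum_distrib_left sum_distrib_right mult_ac)
    also have "(\<Sum>j<n. \<Sum>l<n. v j i * ?adj $$ (j, l) * x l)
        = (\<Sum>l<n. (\<Sum>j<n. v j i * ?adj $$ (j, l)) * x l)"
      by (subst sum.swap) (simp add: sum_distrib_right)
    also have "\<dots> = (\<Sum>l<n. if l = i then det_cols n v * x l else 0)"
      using True by (intro sum.cong) (auto simp: sum_cols_mult_adj_mat)
    finally show ?thesis using True d by simp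
  next
    case False
    then show ?thesis using x v by (auto simp: lin_comb_def Rk_def)
  qed
qed

lemma cramer_coord_lin_comb:
  assumes d: "det_cols n v \<noteq> 0" and j: "j < n"
  shows "cramer_coord n v (lin_comb n v y) j = y j"
proof -
  let ?adj = "adj_mat (col_mat n v)"
  have "(\<Sum>i<n. ?adj $$ (j, i) * lin_comb n v y i) = (\<Sum>i<n. \<Sum>l<n. y l * (?adj $$ (j, i) * v l i))"
    by (simp add: lin_comb_def sum_distrib_left mult_ac)
  also have "\<dots> = (\<Sum>l<n. y l * (\<Sum>i<n. ?adj $$ (j, i) * v l i))"
    by (subst sum.swap) (simp add: sum_distrib_left)
  also have "\<dots> = (\<Sum>l<n. if l = j then y l * det_cols n v else 0)"
    using j by (intro sum.cong) (auto simp: sum_adj_mat_mult_cols)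
  finally show ?thesis
    using j d by (simp add: cramer_coord_def det_cols_upd_eq_sum_adj_mat)
qed

lemma unit_ball_Y_coord_bound:
  assumes "is_norm_on n N"
  obtains B where "\<And>y i. y \<in> unit_ball_Y n N \<Longrightarrow> \<bar>y i\<bar> \<le> B"
proof -
  obtain c where c: "c > 0" and le: "\<And>y. y \<in> Rk n \<Longrightarrow> c * l1_norm n y \<le> N y"
    using is_norm_on_ge_l1_norm[OF assms] by blast
  have "\<bar>y i\<bar> \<le> 1 / c" if y: "y \<in> unit_ball_Y n N" for y i
  proof (cases "i < n")
    case True
    have "y \<in> Rk n" and "N y \<le> 1" using y by (auto simp: unit_ball_Y_def)
    then have "c * \<bar>y i\<bar> \<le> 1"
      using mult_left_mono[OF abs_le_l1_norm[OF True, of y], of c] le[of y] c by linarith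
    then show ?thesis using c by (simp add: field_simps)
  next
    case False
    then show ?thesis using y c by (auto simp: unit_ball_Y_def Rk_def)
  qed
  then show thesis using that by blast
qed

lemma unit_ball_Y_limit:
  assumes N: "is_norm_on n N" and U: "\<And>m. U m \<in> unit_ball_Y n N"
    and lim: "\<And>i. (\<lambda>m. U m i) \<longlonglongrightarrow> u i"
  shows "u \<in> unit_ball_Y n N"
proof -
  have "U m \<in> Rk n" and "N (U m) \<le> 1" for m
    using U by (auto simp: unit_ball_Y_def)
  then show ?thesis
    using Rk_limit[OF _ lim] is_norm_on_limit_le[OF N _ lim tendsto_const]
    by (simp add: unit_ball_Y_def)
qed

lemma unit_ball_Y_cols_seq_compact:
  fixes W :: "nat \<Rightarrow> nat \<Rightarrow> nat \<Rightarrow> real"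
  assumes N: "is_norm_on n N" and W: "\<And>m j. W m j \<in> unit_ball_Y n N"
  obtains r v where "strict_mono r" and "\<And>j. v j \<in> unit_ball_Y n N"
    and "\<And>j i. (\<lambda>m. W (r m) j i) \<longlonglongrightarrow> v j i"
proof -
  obtain B where B: "\<And>y i. y \<in> unit_ball_Y n N \<Longrightarrow> \<bar>y i\<bar> \<le> B"
    using unit_ball_Y_coord_bound[OF N] by blast
  have "\<bar>W m (fst p) (snd p)\<bar> \<le> B" for m p
    using W B by blast
  then obtain r g where r: "strict_mono r" and g: "\<And>p. (\<lambda>m. W (r m) (fst p) (snd p)) \<longlonglongrightarrow> g p"
    using exists_coordwise_convergent_subseq[of "\<lambda>m p. W m (fst p) (snd p)" B] by blast
  have lim: "(\<lambda>m. W (r m) j i) \<longlonglongrightarrow> g (j, i)" for j i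
    using g[of "(j, i)"] by simp
  have "(\<lambda>i. g (j, i)) \<in> unit_ball_Y n N" for j
    by (rule unit_ball_Y_limit[OF N W lim])
  with r show thesis using lim by (rule that)
qed

lemma exists_max_det_cols:
  assumes N: "is_norm_on n N"
  obtains v where "\<And>j. v j \<in> unit_ball_Y n N"
    and "\<And>w. (\<And>j. w j \<in> unit_ball_Y n N) \<Longrightarrow> \<bar>det_cols n w\<bar> \<le> \<bar>det_cols n v\<bar>"
proof -
  obtain B where B: "\<And>y i. y \<in> unit_ball_Y n N \<Longrightarrow> \<bar>y i\<bar> \<le> B"
    using unit_ball_Y_coord_bound[OF N] by blast
  define Vs :: "(nat \<Rightarrow> nat \<Rightarrow> real) set" where "Vs = {w. \<forall>j. w j \<in> unit_ball_Y n N}"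
  have bdd: "bdd_above ((\<lambda>w. \<bar>det_cols n w\<bar>) ` Vs)"
    by (rule bdd_aboveI2[of _ _ "fact n * B ^ n"]) (auto simp: Vs_def intro!: abs_det_cols_le B)
  have "(\<lambda>j i. 0) \<in> Vs"
    by (simp add: Vs_def unit_ball_Y_def is_norm_on_zero[OF N])
  then have "Vs \<noteq> {}" by blast
  define S where "S = (SUP w\<in>Vs. \<bar>det_cols n w\<bar>)"
  have "\<exists>w\<in>Vs. S - inverse (real (Suc m)) < \<bar>det_cols n w\<bar>" for m
  proof -
    have "S - inverse (real (Suc m)) < S" by simp
    then show ?thesis unfolding S_def using less_cSUP_iff[OF \<open>Vs \<noteq> {}\<close> bdd] by blast
  qed
  then obtain W where W: "\<And>m. W m \<in> Vs"
    and W_large: "\<And>m. S - inverse (real (Suc m)) < \<bar>det_cols n (W m)\<bar>"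
    by metis
  obtain r v where r: "strict_mono r" and v: "\<And>j. v j \<in> unit_ball_Y n N"
    and lim: "\<And>j i. (\<lambda>m. W (r m) j i) \<longlonglongrightarrow> v j i"
    using unit_ball_Y_cols_seq_compact[OF N, of W] W by (auto simp: Vs_def)
  have "(\<lambda>m. S - inverse (real (Suc (r m)))) \<longlonglongrightarrow> S - 0"
    using LIMSEQ_subseq_LIMSEQ[OF LIMSEQ_inverse_real_of_nat r]
    by (intro tendsto_intros) (simp add: o_def)
  moreover have "(\<lambda>m. \<bar>det_cols n (W (r m))\<bar>) \<longlonglongrightarrow> \<bar>det_cols n v\<bar>"
    by (intro tendsto_intros tendsto_det_cols lim)
  moreover have "S - inverse (real (Suc (r m))) \<le> \<bar>det_cols n (W (r m))\<bar>" for m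
    using W_large[of "r m"] by simp
  ultimately have S_le: "S \<le> \<bar>det_cols n v\<bar>"
    by (intro LIMSEQ_le[where X = "\<lambda>m. S - inverse (real (Suc (r m)))"]) auto
  show thesis
  proof (rule that[OF v])
    fix w :: "nat \<Rightarrow> nat \<Rightarrow> real" assume "\<And>j. w j \<in> unit_ball_Y n N"
    then have "\<bar>det_cols n w\<bar> \<le> S"
      unfolding S_def by (intro cSUP_upper[OF _ bdd]) (simp add: Vs_def)
    with S_le show "\<bar>det_cols n w\<bar> \<le> \<bar>det_cols n v\<bar>" by linarith
  qed
qed

lemma exists_diag_in_unit_ball_Y:
  assumes N: "is_norm_on n N"
  obtains t where "t > 0" and "\<And>j. (\<lambda>i. if i = j \<and> j < n then t else 0) \<in> unit_ball_Y n N"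
proof -
  obtain C where "C > 0" and C: "\<And>y. y \<in> Rk n \<Longrightarrow> N y \<le> C * l1_norm n y"
    using is_norm_on_le_l1_norm[OF N] by blast
  define t where "t = 1 / C"
  have "t > 0" using \<open>C > 0\<close> by (simp add: t_def)
  have "(\<lambda>i. if i = j \<and> j < n then t else 0) \<in> unit_ball_Y n N" for j
  proof (cases "j < n")
    case True
    have "(\<lambda>i. if i = j \<and> j < n then t else 0) = (\<lambda>i. t * unit_vec j i)"
      using True by (simp add: unit_vec_def fun_eq_iff)
    moreover have "t * N (unit_vec j) \<le> t * C"
      using C[OF unit_vec_Rk[OF True]] l1_norm_unit_vec[OF True] \<open>t > 0\<close> by simp
    ultimately show ?thesis
      using is_norm_on_scale[OF N unit_vec_Rk[OF True], of t] \<open>t > 0\<close> \<open>C > 0\<close> unit_vec_Rk[OF True]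
      by (simp add: unit_ball_Y_def t_def)
  next
    case False
    then show ?thesis by (simp add: unit_ball_Y_def is_norm_on_zero[OF N])
  qed
  with \<open>t > 0\<close> show thesis by (rule that)
qed

text \<open>Take the columns of maximal determinant in the unit ball. Replacing column \<open>j\<close> by \<open>x / N x\<close>
  cannot increase the determinant, which by Cramer's rule bounds the \<open>j\<close>-th coordinate of \<open>x\<close>
  by \<open>N x\<close>.\<close>

lemma auerbach_basis:
  assumes N: "is_norm_on n N"
  obtains v where "\<And>j. v j \<in> unit_ball_Y n N" and "det_cols n v \<noteq> 0"
    and "\<And>x j. x \<in> Rk n \<Longrightarrow> \<bar>cramer_coord n v x j\<bar> \<le> N x"
proof -
  obtain v where v: "\<And>j. v j \<in> unit_ball_Y n N"
    and max: "\<And>w. (\<And>j. w j \<in> unit_ball_Y n N) \<Longrightarrow> \<bar>det_cols n w\<bar> \<le> \<bar>det_cols n v\<bar>"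
    using exists_max_det_cols[OF N] by blast
  obtain t where "t > 0" and "\<And>j. (\<lambda>i. if i = j \<and> j < n then t else 0) \<in> unit_ball_Y n N"
    using exists_diag_in_unit_ball_Y[OF N] by blast
  then have "t ^ n \<le> \<bar>det_cols n v\<bar>"
    using max[of "\<lambda>j i. if i = j \<and> j < n then t else 0"] by (simp add: det_cols_diag)
  moreover have "0 < t ^ n" using \<open>t > 0\<close> by simp
  ultimately have d: "det_cols n v \<noteq> 0" by auto
  have "\<bar>cramer_coord n v x j\<bar> \<le> N x" if x: "x \<in> Rk n" for x j
  proof (cases "j < n \<and> x \<noteq> (\<lambda>_. 0)")
    case True
    define s where "s = N x"
    have "s > 0"
      using True is_norm_on_nonneg[OF N x] is_norm_on_eq_0_iff[OF N x] by (simp add: s_def)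
    then have "(\<lambda>i. x i / s) \<in> unit_ball_Y n N"
      using is_norm_on_divide[OF N x, of s] x by (simp add: unit_ball_Y_def s_def)
    then have "\<bar>det_cols n (v(j := (\<lambda>i. x i / s)))\<bar> \<le> \<bar>det_cols n v\<bar>"
      using v by (intro max) simp
    then have "\<bar>det_cols n (v(j := x))\<bar> / s \<le> \<bar>det_cols n v\<bar>"
      using True \<open>s > 0\<close> by (simp add: det_cols_upd_divide abs_divide)
    then show ?thesis
      using True d \<open>s > 0\<close> by (simp add: cramer_coord_def abs_divide divide_le_eq mult.commute s_def)
  next
    case False
    then show ?thesis
      using is_norm_on_nonneg[OF N x] by (auto simp: cramer_coord_def det_cols_upd_eq_sum_adj_mat)
  qed
  with v d show thesis by (rule that)
qed

text \<open>Exactly the norms for which the unit vectors form an Auerbach basis.\<close>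

definition auerbach_norm :: "nat \<Rightarrow> ((nat \<Rightarrow> real) \<Rightarrow> real) \<Rightarrow> bool" where
  "auerbach_norm n M \<longleftrightarrow> is_norm_on n M \<and> (\<forall>y\<in>Rk n. max_norm n y \<le> M y \<and> M y \<le> l1_norm n y)"

lemma auerbach_normI:
  assumes "n \<ge> 1"
    and scale: "\<And>c y. y \<in> Rk n \<Longrightarrow> M (\<lambda>i. c * y i) = \<bar>c\<bar> * M y"
    and triangle: "\<And>y z. y \<in> Rk n \<Longrightarrow> z \<in> Rk n \<Longrightarrow> M (\<lambda>i. y i + z i) \<le> M y + M z"
    and bounds: "\<And>y. y \<in> Rk n \<Longrightarrow> max_norm n y \<le> M y \<and> M y \<le> l1_norm n y"
  shows "auerbach_norm n M"
proof -
  have "M y = 0 \<longleftrightarrow> y = (\<lambda>_. 0)" if y: "y \<in> Rk n" for y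
  proof
    assume "M y = 0"
    then have "y i = 0" for i
      using abs_le_max_norm[of i n y] bounds[OF y] y by (cases "i < n") (auto simp: Rk_def)
    then show "y = (\<lambda>_. 0)" by auto
  next
    assume "y = (\<lambda>_. 0)"
    then have "l1_norm n y = 0" by (simp add: l1_norm_def)
    then show "M y = 0" using bounds[OF y] max_norm_nonneg[OF \<open>n \<ge> 1\<close>, of y] by linarith
  qed
  moreover have "0 \<le> M y" if "y \<in> Rk n" for y
    using bounds[OF that] max_norm_nonneg[OF \<open>n \<ge> 1\<close>, of y] by linarith
  ultimately show ?thesis
    using scale triangle bounds by (simp add: auerbach_norm_def is_norm_on_def)
qed

lemma auerbach_norm_l1_norm: "n \<ge> 1 \<Longrightarrow> auerbach_norm n (l1_norm n)"
  by (rule auerbach_normI) (auto simp: l1_norm_scale l1_norm_triangle max_norm_le_l1_norm)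

context
  fixes n M
  assumes M: "auerbach_norm n M"
begin

lemma auerbach_norm_is_norm_on: "is_norm_on n M"
  using M by (simp add: auerbach_norm_def)

lemma auerbach_norm_ge_max_norm: "y \<in> Rk n \<Longrightarrow> max_norm n y \<le> M y"
  and auerbach_norm_le_l1_norm: "y \<in> Rk n \<Longrightarrow> M y \<le> l1_norm n y"
  using M by (simp_all add: auerbach_norm_def)

lemma auerbach_norm_lipschitz:
  assumes "y \<in> Rk n" and "q \<in> Rk n"
  shows "\<bar>M y - M q\<bar> \<le> l1_norm n (\<lambda>i. y i - q i)"
  using is_norm_on_triangle_diff[OF auerbach_norm_is_norm_on assms]
    is_norm_on_triangle_diff[OF auerbach_norm_is_norm_on assms(2,1)]
    is_norm_on_minus_commute[OF auerbach_norm_is_norm_on assms]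
    auerbach_norm_le_l1_norm[OF Rk_diff[OF assms]]
  by linarith

end

lemma auerbach_norm_comp_lin_comb:
  assumes N: "is_norm_on n N" and "n \<ge> 1"
    and v: "\<And>j. v j \<in> unit_ball_Y n N" and d: "det_cols n v \<noteq> 0"
    and coord_le: "\<And>x j. x \<in> Rk n \<Longrightarrow> \<bar>cramer_coord n v x j\<bar> \<le> N x"
  shows "auerbach_norm n (\<lambda>y. N (lin_comb n v y))"
proof (rule auerbach_normI[OF \<open>n \<ge> 1\<close>])
  have vR: "v j \<in> Rk n" and vN: "N (v j) \<le> 1" for j
    using v[of j] by (auto simp: unit_ball_Y_def)
  have lin_comb_Rk: "lin_comb n v y \<in> Rk n" for y
    by (rule Rk_lin_comb) (rule vR)
  fix c and y z :: "nat \<Rightarrow> real"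
  show "N (lin_comb n v (\<lambda>i. c * y i)) = \<bar>c\<bar> * N (lin_comb n v y)"
    unfolding lin_comb_scale by (rule is_norm_on_scale[OF N lin_comb_Rk])
  show "N (lin_comb n v (\<lambda>i. y i + z i)) \<le> N (lin_comb n v y) + N (lin_comb n v z)"
    unfolding lin_comb_add by (rule is_norm_on_triangle[OF N lin_comb_Rk lin_comb_Rk])
  have "max_norm n y \<le> N (lin_comb n v y)"
    by (rule max_norm_leI[OF \<open>n \<ge> 1\<close>]) (metis lin_comb_Rk cramer_coord_lin_comb[OF d] coord_le)
  moreover have "N (lin_comb n v y) \<le> (\<Sum>j<n. \<bar>y j\<bar> * N (v j))"
    unfolding lin_comb_def by (rule is_norm_on_sum_le[OF N]) (auto intro: vR)
  moreover have "(\<Sum>j<n. \<bar>y j\<bar> * N (v j)) \<le> l1_norm n y"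
    unfolding l1_norm_def by (rule sum_mono) (simp add: vN mult_left_le)
  ultimately show "max_norm n y \<le> N (lin_comb n v y) \<and> N (lin_comb n v y) \<le> l1_norm n y"
    by simp
qed

lemma fixed_lip_width_comp_lin_comb_le:
  assumes "\<gamma> \<ge> 0" and v: "\<And>j. j < n \<Longrightarrow> v j \<in> Rk n" and d: "det_cols n v \<noteq> 0"
  shows "fixed_lip_width \<gamma> K n (\<lambda>y. N (lin_comb n v y)) \<le> fixed_lip_width \<gamma> K n N"
proof (rule fixed_lip_width_le_comp[OF \<open>\<gamma> \<ge> 0\<close>, where T = "lin_comb n v"])
  show "lin_comb n v ` unit_ball_Y n (\<lambda>y. N (lin_comb n v y)) \<subseteq> unit_ball_Y n N"
    using Rk_lin_comb[OF v] by (auto simp: unit_ball_Y_def)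
  show "unit_ball_Y n N \<subseteq> lin_comb n v ` unit_ball_Y n (\<lambda>y. N (lin_comb n v y))"
  proof
    fix z assume z: "z \<in> unit_ball_Y n N"
    then have "z = lin_comb n v (cramer_coord n v z)"
      using lin_comb_cramer_coord[OF d _ v] by (simp add: unit_ball_Y_def)
    moreover have "cramer_coord n v z \<in> unit_ball_Y n (\<lambda>y. N (lin_comb n v y))"
      using z \<open>z = lin_comb n v (cramer_coord n v z)\<close> Rk_cramer_coord by (simp add: unit_ball_Y_def)
    ultimately show "z \<in> lin_comb n v ` unit_ball_Y n (\<lambda>y. N (lin_comb n v y))"
      by (rule image_eqI)
  qed
  show "N (\<lambda>i. lin_comb n v y i - lin_comb n v y' i) \<le> N (lin_comb n v (\<lambda>i. y i - y' i))" for y y'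
    by (simp add: lin_comb_diff)
qed

lemma exists_auerbach_norm_fixed_lip_width_le:
  assumes N: "is_norm_on n N" and "n \<ge> 1" and "\<gamma> \<ge> 0"
  shows "\<exists>M. auerbach_norm n M \<and> fixed_lip_width \<gamma> K n M \<le> fixed_lip_width \<gamma> K n N"
proof -
  obtain v where v: "\<And>j. v j \<in> unit_ball_Y n N" and d: "det_cols n v \<noteq> 0"
    and "\<And>x j. x \<in> Rk n \<Longrightarrow> \<bar>cramer_coord n v x j\<bar> \<le> N x"
    using auerbach_basis[OF N] by blast
  then have "auerbach_norm n (\<lambda>y. N (lin_comb n v y))"
    by (rule auerbach_norm_comp_lin_comb[OF N \<open>n \<ge> 1\<close>])
  moreover have "v j \<in> Rk n" for j
    using v by (simp add: unit_ball_Y_def)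
  then have "fixed_lip_width \<gamma> K n (\<lambda>y. N (lin_comb n v y)) \<le> fixed_lip_width \<gamma> K n N"
    using fixed_lip_width_comp_lin_comb_le[OF \<open>\<gamma> \<ge> 0\<close> _ d] by blast
  ultimately show ?thesis by blast
qed

subsection \<open>Compactness of the Auerbach norms\<close>

definition grid_points :: "nat \<Rightarrow> real set" where
  "grid_points K = (\<lambda>j::int. j / real (Suc K)) ` {- int (K * Suc K) .. int (K * Suc K)}"

definition grid :: "nat \<Rightarrow> nat \<Rightarrow> (nat \<Rightarrow> real) set" where
  "grid n K = (\<lambda>f i. if i < n then f i else 0) ` ({..<n} \<rightarrow>\<^sub>E grid_points K)"

lemma finite_grid: "finite (grid n K)"
  unfolding grid_def grid_points_def by (intro finite_imageI finite_PiE) simp_all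

lemma grid_subset_Rk: "grid n K \<subseteq> Rk n"
  unfolding grid_def by (rule image_subsetI) (simp add: Rk_def)

lemma exists_grid_point_near:
  assumes "\<bar>x\<bar> \<le> real K"
  shows "\<exists>p\<in>grid_points K. \<bar>x - p\<bar> \<le> 1 / real (Suc K)"
proof
  define s where "s = real (Suc K)"
  define M where "M = int (K * Suc K)"
  define j where "j = round (x * s)"
  have "s > 0" by (simp add: s_def)
  have "\<bar>x * s\<bar> \<le> real K * s"
    using assms \<open>s > 0\<close> by (simp add: abs_mult mult_right_mono)
  also have "\<dots> = of_int M"
    by (simp add: s_def M_def algebra_simps)
  finally have lo: "of_int (- M) \<le> x * s" and hi: "x * s \<le> of_int M"
    by linarith+
  have "- M \<le> j"
    using round_mono[OF lo] by (simp only: j_def round_of_int)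
  moreover have "j \<le> M"
    using round_mono[OF hi] by (simp only: j_def round_of_int)
  ultimately have "j \<in> {- M .. M}" by simp
  then show "j / s \<in> grid_points K"
    unfolding grid_points_def M_def[symmetric] s_def by (rule imageI)
  have "\<bar>x - j / s\<bar> = \<bar>x * s - j\<bar> / s"
    using \<open>s > 0\<close> by (simp add: field_simps abs_divide)
  also have "\<dots> \<le> 1 / s"
    using of_int_round_abs_le[of "x * s"] \<open>s > 0\<close>
    by (simp add: j_def divide_right_mono abs_minus_commute)
  finally show "\<bar>x - j / s\<bar> \<le> 1 / real (Suc K)" by (simp add: s_def)
qed

lemma exists_grid_near:
  assumes "\<And>i. i < n \<Longrightarrow> \<bar>y i\<bar> \<le> real K"
  shows "\<exists>q\<in>grid n K. l1_norm n (\<lambda>i. y i - q i) \<le> real n / real (Suc K)"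
proof -
  have "\<forall>i. \<exists>x. i < n \<longrightarrow> x \<in> grid_points K \<and> \<bar>y i - x\<bar> \<le> 1 / real (Suc K)"
    using exists_grid_point_near[OF assms] by blast
  from choice[OF this] obtain p
    where p: "\<forall>i. i < n \<longrightarrow> p i \<in> grid_points K \<and> \<bar>y i - p i\<bar> \<le> 1 / real (Suc K)"
    by blast
  define q where "q i = (if i < n then p i else 0)" for i
  have "q \<in> grid n K"
    unfolding grid_def q_def by (rule image_eqI[of _ _ "restrict p {..<n}"]) (auto simp: p)
  moreover have "l1_norm n (\<lambda>i. y i - q i) \<le> (\<Sum>i<n. 1 / real (Suc K))"
    unfolding l1_norm_def by (rule sum_mono) (use p in \<open>simp add: q_def\<close>)
  ultimately show ?thesis by auto
qed

lemma is_norm_on_diff_le_l1_norm: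
  assumes A: "is_norm_on n A" and B: "is_norm_on n B"
    and sphere: "\<And>u. u \<in> Rk n \<Longrightarrow> l1_norm n u = 1 \<Longrightarrow> \<bar>A u - B u\<bar> \<le> e"
    and y: "y \<in> Rk n"
  shows "\<bar>A y - B y\<bar> \<le> e * l1_norm n y"
proof (cases "y = (\<lambda>_. 0)")
  case True
  then show ?thesis by (simp add: is_norm_on_zero[OF A] is_norm_on_zero[OF B] l1_norm_def)
next
  case False
  define t where "t = l1_norm n y"
  have "t > 0"
    using False l1_norm_eq_0_iff[OF y] l1_norm_nonneg[of n y] by (simp add: t_def)
  define u where "u = (\<lambda>i. y i / t)"
  have u: "u \<in> Rk n" "l1_norm n u = 1"
    using y \<open>t > 0\<close> by (simp_all add: u_def l1_norm_divide t_def)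
  have "y = (\<lambda>i. t * u i)"
    using \<open>t > 0\<close> by (simp add: u_def)
  then have "\<bar>A y - B y\<bar> = t * \<bar>A u - B u\<bar>"
    using is_norm_on_scale[OF A u(1), of t] is_norm_on_scale[OF B u(1), of t] \<open>t > 0\<close>
    by (simp add: right_diff_distrib[symmetric] abs_mult)
  also have "\<dots> \<le> t * e"
    using sphere[OF u] \<open>t > 0\<close> by simp
  finally show ?thesis by (simp add: t_def mult.commute)
qed

text \<open>Dividing by \<open>1 + l1_norm n q\<close> bounds the values uniformly in \<open>q\<close>, as the diagonal
  argument requires.\<close>

lemma exists_subseq_convergent_on_grids:
  fixes Ms :: "nat \<Rightarrow> (nat \<Rightarrow> real) \<Rightarrow> real"
  assumes Ms: "\<And>m. auerbach_norm n (Ms m)"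
  obtains r where "strict_mono r" and "\<And>K q. q \<in> grid n K \<Longrightarrow> convergent (\<lambda>m. Ms (r m) q)"
proof -
  define S where "S = (\<Union>K. grid n K)"
  have "countable S"
    unfolding S_def by (intro countable_UN countableI_type countable_finite finite_grid)
  define f where "f m q = Ms m q / (1 + l1_norm n q)" for m q
  have f_bound: "norm (f m q) \<le> 1" if "q \<in> S" for m q
  proof -
    have q: "q \<in> Rk n" using that grid_subset_Rk by (auto simp: S_def)
    have "0 \<le> Ms m q" "Ms m q \<le> l1_norm n q"
      using is_norm_on_nonneg[OF auerbach_norm_is_norm_on[OF Ms] q] auerbach_norm_le_l1_norm[OF Ms q]
      by auto
    then show ?thesis
      using l1_norm_nonneg[of n q] by (simp add: f_def abs_divide divide_le_eq)
  qed
  obtain r where r: "strict_mono r" and conv: "\<And>q. q \<in> S \<Longrightarrow> \<exists>l. (\<lambda>m. f (r m) q) \<longlonglongrightarrow> l"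
    by (rule function_convergent_subsequence[OF \<open>countable S\<close>, of f 1]) (use f_bound in auto)
  have "convergent (\<lambda>m. Ms (r m) q)" if "q \<in> grid n K" for K q
  proof -
    have "q \<in> S" using that by (auto simp: S_def)
    then obtain l where "(\<lambda>m. f (r m) q) \<longlonglongrightarrow> l"
      using conv by blast
    then have "(\<lambda>m. f (r m) q * (1 + l1_norm n q)) \<longlonglongrightarrow> l * (1 + l1_norm n q)"
      by (intro tendsto_intros)
    moreover have "f (r m) q * (1 + l1_norm n q) = Ms (r m) q" for m
      using l1_norm_nonneg[of n q] by (simp add: f_def)
    ultimately show ?thesis by (auto simp: convergent_def)
  qed
  with r show thesis by (rule that)
qed

lemma exists_grid_mesh_less:
  assumes "e > 0" and "n \<ge> 1"
  obtains K :: nat where "K \<ge> 1" and "real n / real (Suc K) < e"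
proof -
  obtain K :: nat where "real n / e < real K"
    using reals_Archimedean2 by blast
  then have K: "real n < real K * e"
    using \<open>e > 0\<close> by (simp add: pos_divide_less_eq)
  then have "K \<ge> 1"
    using \<open>n \<ge> 1\<close> by (cases K) auto
  moreover have "real K * e < e * real (Suc K)"
    using \<open>e > 0\<close> by (simp add: algebra_simps)
  then have "real n / real (Suc K) < e"
    using K by (simp add: divide_less_eq)
  ultimately show thesis by (rule that)
qed

text \<open>Pointwise convergence on a fine grid becomes uniform convergence on the \<open>l1\<close>-sphere, because
  all Auerbach norms are \<open>1\<close>-Lipschitz for the \<open>l1\<close>-norm.\<close>

lemma auerbach_norms_uniformly_Cauchy:
  fixes Ms :: "nat \<Rightarrow> (nat \<Rightarrow> real) \<Rightarrow> real"
  assumes "n \<ge> 1" and Ms: "\<And>m. auerbach_norm n (Ms m)"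
    and conv: "\<And>K q. q \<in> grid n K \<Longrightarrow> convergent (\<lambda>m. Ms m q)" and "e > 0"
  shows "\<exists>m0. \<forall>a\<ge>m0. \<forall>b\<ge>m0. \<forall>y\<in>Rk n. \<bar>Ms a y - Ms b y\<bar> \<le> e * l1_norm n y"
proof -
  obtain K where "K \<ge> 1" and mesh: "real n / real (Suc K) < e / 3"
    using exists_grid_mesh_less[of "e / 3" n] \<open>e > 0\<close> \<open>n \<ge> 1\<close> by auto
  have "\<forall>q\<in>grid n K. eventually (\<lambda>m. dist (Ms m q) (lim (\<lambda>m. Ms m q)) < e / 6) sequentially"
  proof
    fix q assume "q \<in> grid n K"
    then have "(\<lambda>m. Ms m q) \<longlonglongrightarrow> lim (\<lambda>m. Ms m q)"
      using conv by (simp add: convergent_LIMSEQ_iff)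
    then show "eventually (\<lambda>m. dist (Ms m q) (lim (\<lambda>m. Ms m q)) < e / 6) sequentially"
      by (rule tendstoD) (use \<open>e > 0\<close> in simp)
  qed
  then have "eventually (\<lambda>m. \<forall>q\<in>grid n K. dist (Ms m q) (lim (\<lambda>m. Ms m q)) < e / 6) sequentially"
    by (rule eventually_ball_finite[OF finite_grid])
  then obtain m0 where m0: "\<And>m q. m \<ge> m0 \<Longrightarrow> q \<in> grid n K \<Longrightarrow> dist (Ms m q) (lim (\<lambda>m. Ms m q)) < e / 6"
    unfolding eventually_sequentially by blast
  have "\<bar>Ms a y - Ms b y\<bar> \<le> e * l1_norm n y" if "a \<ge> m0" "b \<ge> m0" "y \<in> Rk n" for a b y
  proof (rule is_norm_on_diff_le_l1_norm[OF auerbach_norm_is_norm_on[OF Ms]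
        auerbach_norm_is_norm_on[OF Ms] _ \<open>y \<in> Rk n\<close>])
    fix u assume u: "u \<in> Rk n" "l1_norm n u = 1"
    have "\<bar>u i\<bar> \<le> real K" if "i < n" for i
      using abs_le_l1_norm[OF that, of u] u(2) \<open>K \<ge> 1\<close> by simp
    then obtain q where q: "q \<in> grid n K" and uq: "l1_norm n (\<lambda>i. u i - q i) \<le> real n / real (Suc K)"
      using exists_grid_near by blast
    have "q \<in> Rk n" using q grid_subset_Rk by blast
    have "\<bar>Ms a u - Ms a q\<bar> \<le> l1_norm n (\<lambda>i. u i - q i)"
      and "\<bar>Ms b u - Ms b q\<bar> \<le> l1_norm n (\<lambda>i. u i - q i)"
      using auerbach_norm_lipschitz[OF Ms u(1) \<open>q \<in> Rk n\<close>] by auto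
    moreover have "\<bar>Ms a q - Ms b q\<bar> < e / 3"
      using m0[OF \<open>a \<ge> m0\<close> q] m0[OF \<open>b \<ge> m0\<close> q] unfolding dist_real_def by linarith
    ultimately show "\<bar>Ms a u - Ms b u\<bar> \<le> e"
      using uq mesh by linarith
  qed
  then show ?thesis by blast
qed

lemma Cauchy_if_relatively_uniformly_Cauchy:
  fixes Ms :: "nat \<Rightarrow> (nat \<Rightarrow> real) \<Rightarrow> real"
  assumes Cauchy: "\<And>e. e > 0 \<Longrightarrow> \<exists>m0. \<forall>a\<ge>m0. \<forall>b\<ge>m0. \<forall>y\<in>Rk n. \<bar>Ms a y - Ms b y\<bar> \<le> e * l1_norm n y"
    and y: "y \<in> Rk n"
  shows "Cauchy (\<lambda>m. Ms m y)"
proof (rule CauchyI)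
  fix e :: real assume "e > 0"
  define \<delta> where "\<delta> = e / (2 * (1 + l1_norm n y))"
  have "1 + l1_norm n y > 0"
    using l1_norm_nonneg[of n y] by linarith
  then have "\<delta> > 0" and \<delta>_half: "\<delta> * (1 + l1_norm n y) = e / 2"
    using \<open>e > 0\<close> by (simp_all add: \<delta>_def field_simps)
  moreover have "\<delta> * l1_norm n y \<le> \<delta> * (1 + l1_norm n y)"
    using \<open>\<delta> > 0\<close> by simp
  ultimately have \<delta>_small: "\<delta> * l1_norm n y < e"
    using \<open>e > 0\<close> by linarith
  obtain m0 where m0: "\<forall>a\<ge>m0. \<forall>b\<ge>m0. \<bar>Ms a y - Ms b y\<bar> \<le> \<delta> * l1_norm n y"
    using Cauchy[OF \<open>\<delta> > 0\<close>] y by blast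
  show "\<exists>m0. \<forall>a\<ge>m0. \<forall>b\<ge>m0. norm (Ms a y - Ms b y) < e"
  proof (intro exI allI impI)
    fix a b assume "m0 \<le> a" "m0 \<le> b"
    then have "\<bar>Ms a y - Ms b y\<bar> \<le> \<delta> * l1_norm n y"
      using m0 by blast
    then show "norm (Ms a y - Ms b y) < e"
      using \<delta>_small by simp
  qed
qed

lemma auerbach_norm_limit:
  fixes Ms :: "nat \<Rightarrow> (nat \<Rightarrow> real) \<Rightarrow> real"
  assumes "n \<ge> 1" and Ms: "\<And>m. auerbach_norm n (Ms m)"
    and lim: "\<And>y. y \<in> Rk n \<Longrightarrow> (\<lambda>m. Ms m y) \<longlonglongrightarrow> M y"
  shows "auerbach_norm n M"
proof (rule auerbach_normI[OF \<open>n \<ge> 1\<close>])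
  fix c y assume y: "y \<in> Rk n"
  have "(\<lambda>m. Ms m (\<lambda>i. c * y i)) \<longlonglongrightarrow> M (\<lambda>i. c * y i)"
    using y by (intro lim) simp
  moreover have "(\<lambda>m. Ms m (\<lambda>i. c * y i)) = (\<lambda>m. \<bar>c\<bar> * Ms m y)"
    using is_norm_on_scale[OF auerbach_norm_is_norm_on[OF Ms] y] by simp
  then have "(\<lambda>m. Ms m (\<lambda>i. c * y i)) \<longlonglongrightarrow> \<bar>c\<bar> * M y"
    by (simp add: lim y tendsto_mult_left)
  ultimately show "M (\<lambda>i. c * y i) = \<bar>c\<bar> * M y"
    by (rule LIMSEQ_unique)
next
  fix y z assume y: "y \<in> Rk n" and z: "z \<in> Rk n"
  have "(\<lambda>m. Ms m (\<lambda>i. y i + z i)) \<longlonglongrightarrow> M (\<lambda>i. y i + z i)"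
    using y z by (intro lim) simp
  moreover have "(\<lambda>m. Ms m y + Ms m z) \<longlonglongrightarrow> M y + M z"
    by (intro tendsto_add lim y z)
  ultimately show "M (\<lambda>i. y i + z i) \<le> M y + M z"
    by (rule LIMSEQ_le) (use is_norm_on_triangle[OF auerbach_norm_is_norm_on[OF Ms] y z] in auto)
next
  fix y assume y: "y \<in> Rk n"
  have "max_norm n y \<le> M y"
    by (rule LIMSEQ_le_const[OF lim[OF y]]) (use auerbach_norm_ge_max_norm[OF Ms y] in blast)
  moreover have "M y \<le> l1_norm n y"
    by (rule LIMSEQ_le_const2[OF lim[OF y]]) (use auerbach_norm_le_l1_norm[OF Ms y] in blast)
  ultimately show "max_norm n y \<le> M y \<and> M y \<le> l1_norm n y" ..
qed

lemma auerbach_norm_uniform_limit: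
  fixes Ms :: "nat \<Rightarrow> (nat \<Rightarrow> real) \<Rightarrow> real"
  assumes "n \<ge> 1" and Ms: "\<And>m. auerbach_norm n (Ms m)"
    and Cauchy: "\<And>e. e > 0 \<Longrightarrow> \<exists>m0. \<forall>a\<ge>m0. \<forall>b\<ge>m0. \<forall>y\<in>Rk n. \<bar>Ms a y - Ms b y\<bar> \<le> e * l1_norm n y"
  obtains M where "auerbach_norm n M"
    and "\<And>e. e > 0 \<Longrightarrow> \<exists>m0::nat. \<forall>m\<ge>m0. \<forall>y\<in>Rk n. \<bar>Ms m y - M y\<bar> \<le> e * l1_norm n y"
proof -
  define M where "M y = lim (\<lambda>m. Ms m y)" for y
  have lim: "(\<lambda>m. Ms m y) \<longlonglongrightarrow> M y" if "y \<in> Rk n" for y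
    using Cauchy_if_relatively_uniformly_Cauchy[OF Cauchy that]
    by (simp add: M_def Cauchy_convergent_iff convergent_LIMSEQ_iff)
  have "auerbach_norm n M"
    by (rule auerbach_norm_limit[where Ms = Ms, OF \<open>n \<ge> 1\<close> Ms lim])
  moreover have "\<exists>m0::nat. \<forall>m\<ge>m0. \<forall>y\<in>Rk n. \<bar>Ms m y - M y\<bar> \<le> e * l1_norm n y" if "e > 0" for e
  proof -
    obtain m0 where m0: "\<forall>a\<ge>m0. \<forall>b\<ge>m0. \<forall>y\<in>Rk n. \<bar>Ms a y - Ms b y\<bar> \<le> e * l1_norm n y"
      using Cauchy[OF \<open>e > 0\<close>] by blast
    have "\<bar>Ms m y - M y\<bar> \<le> e * l1_norm n y" if "m \<ge> m0" "y \<in> Rk n" for m y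
    proof (rule LIMSEQ_le_const2)
      show "(\<lambda>b. \<bar>Ms m y - Ms b y\<bar>) \<longlonglongrightarrow> \<bar>Ms m y - M y\<bar>"
        by (intro tendsto_intros lim \<open>y \<in> Rk n\<close>)
      show "\<exists>N. \<forall>b\<ge>N. \<bar>Ms m y - Ms b y\<bar> \<le> e * l1_norm n y"
        using m0 that by blast
    qed
    then show ?thesis by blast
  qed
  ultimately show thesis by (rule that)
qed

lemma auerbach_norm_seq_compact:
  fixes Ms :: "nat \<Rightarrow> (nat \<Rightarrow> real) \<Rightarrow> real"
  assumes "n \<ge> 1" and Ms: "\<And>m. auerbach_norm n (Ms m)"
  shows "\<exists>r M. strict_mono r \<and> auerbach_norm n M \<and>
    (\<forall>e>0. \<exists>m0::nat. \<forall>m\<ge>m0. \<forall>y\<in>Rk n. \<bar>Ms (r m) y - M y\<bar> \<le> e * l1_norm n y)"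
proof -
  obtain r where r: "strict_mono r" and conv: "\<And>K q. q \<in> grid n K \<Longrightarrow> convergent (\<lambda>m. Ms (r m) q)"
    using exists_subseq_convergent_on_grids[where Ms = Ms, OF Ms] by blast
  have Cauchy: "\<exists>m0. \<forall>a\<ge>m0. \<forall>b\<ge>m0. \<forall>y\<in>Rk n. \<bar>Ms (r a) y - Ms (r b) y\<bar> \<le> e * l1_norm n y"
    if "e > 0" for e
    by (rule auerbach_norms_uniformly_Cauchy[OF \<open>n \<ge> 1\<close> Ms conv that])
  obtain M where M: "auerbach_norm n M"
    and lim: "\<And>e. e > 0 \<Longrightarrow> \<exists>m0::nat. \<forall>m\<ge>m0. \<forall>y\<in>Rk n. \<bar>Ms (r m) y - M y\<bar> \<le> e * l1_norm n y"
    by (rule auerbach_norm_uniform_limit[of n "\<lambda>m. Ms (r m)"]) (use \<open>n \<ge> 1\<close> Ms Cauchy in auto)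
  show ?thesis using r M lim by blast
qed

subsection \<open>The minimal width is attained\<close>

lemma one_minus_inverse_square_le: "c \<ge> 1 \<Longrightarrow> 1 - 1 / c\<^sup>2 \<le> 2 * (c - 1)"
  for c :: real
proof -
  assume "c \<ge> 1"
  then have "c \<le> c * c"
    using mult_left_mono[of 1 c c] by simp
  then have "c + 1 \<le> 2 * c\<^sup>2"
    using \<open>c \<ge> 1\<close> unfolding power2_eq_square by linarith
  then have "(c - 1) * (c + 1) \<le> (c - 1) * (2 * c\<^sup>2)"
    using \<open>c \<ge> 1\<close> by (intro mult_left_mono) auto
  then have "c\<^sup>2 - 1 \<le> 2 * (c - 1) * c\<^sup>2"
    by (simp add: algebra_simps power2_eq_square)
  then show ?thesis
    using \<open>c \<ge> 1\<close> by (simp add: field_simps)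
qed

lemma fixed_lip_width_le_close_auerbach_norm:
  assumes "n \<ge> 1" and "\<gamma> \<ge> 0" and "\<epsilon> \<ge> 0"
    and A: "auerbach_norm n A" and M: "auerbach_norm n M"
    and close: "\<And>y. y \<in> Rk n \<Longrightarrow> \<bar>A y - M y\<bar> \<le> \<epsilon> * l1_norm n y"
  shows "fixed_lip_width \<gamma> K n M \<le> fixed_lip_width \<gamma> K n A + ennreal (2 * \<gamma> * real n * \<epsilon>)"
proof -
  define c where "c = 1 + \<epsilon> * real n"
  have "c \<ge> 1" using \<open>\<epsilon> \<ge> 0\<close> by (simp add: c_def)
  have close_max: "\<bar>A y - M y\<bar> \<le> \<epsilon> * real n * max_norm n y" if "y \<in> Rk n" for y
    using order.trans[OF close[OF that] mult_left_mono[OF l1_norm_le_max_norm[of n y] \<open>\<epsilon> \<ge> 0\<close>]]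
    by (simp add: mult.assoc)
  have "\<epsilon> * real n * max_norm n y \<le> \<epsilon> * real n * A y"
    and "\<epsilon> * real n * max_norm n y \<le> \<epsilon> * real n * M y" if "y \<in> Rk n" for y
    using auerbach_norm_ge_max_norm[OF A that] auerbach_norm_ge_max_norm[OF M that] \<open>\<epsilon> \<ge> 0\<close>
    by (simp_all add: mult_left_mono)
  then have "A y \<le> c * M y" and "M y \<le> c * A y" if "y \<in> Rk n" for y
    using close_max[OF that] that by (fastforce simp: c_def algebra_simps)+
  then have "fixed_lip_width \<gamma> K n M \<le> fixed_lip_width \<gamma> K n A + ennreal (\<gamma> * (1 - 1 / c\<^sup>2))"
    by (intro fixed_lip_width_le_equiv_norm auerbach_norm_is_norm_on A M \<open>c \<ge> 1\<close> \<open>\<gamma> \<ge> 0\<close>)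
  also have "\<dots> \<le> fixed_lip_width \<gamma> K n A + ennreal (2 * \<gamma> * real n * \<epsilon>)"
    using mult_left_mono[OF one_minus_inverse_square_le[OF \<open>c \<ge> 1\<close>] \<open>\<gamma> \<ge> 0\<close>]
    by (intro add_left_mono ennreal_leI) (simp add: c_def mult_ac)
  finally show ?thesis .
qed

lemma fixed_lip_width_lower_semicontinuous:
  assumes "n \<ge> 1" and "\<gamma> \<ge> 0" and As: "\<And>m. auerbach_norm n (As m)" and M: "auerbach_norm n M"
    and conv: "\<forall>e>0. \<exists>m0::nat. \<forall>m\<ge>m0. \<forall>y\<in>Rk n. \<bar>As m y - M y\<bar> \<le> e * l1_norm n y"
    and "e > 0"
  shows "\<exists>m0::nat. \<forall>m\<ge>m0. fixed_lip_width \<gamma> K n M \<le> fixed_lip_width \<gamma> K n (As m) + ennreal e"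
proof -
  define \<epsilon> where "\<epsilon> = e / (2 * \<gamma> * real n + 1)"
  have "0 \<le> 2 * \<gamma> * real n" using \<open>\<gamma> \<ge> 0\<close> by simp
  then have "2 * \<gamma> * real n + 1 > 0" by linarith
  then have "\<epsilon> > 0" and "2 * \<gamma> * real n * \<epsilon> \<le> e"
    using \<open>e > 0\<close> by (simp_all add: \<epsilon>_def field_simps)
  obtain m0 :: nat where m0: "\<forall>m\<ge>m0. \<forall>y\<in>Rk n. \<bar>As m y - M y\<bar> \<le> \<epsilon> * l1_norm n y"
    using conv \<open>\<epsilon> > 0\<close> by blast
  have "fixed_lip_width \<gamma> K n M \<le> fixed_lip_width \<gamma> K n (As m) + ennreal e" if "m \<ge> m0" for m
  proof -
    have "fixed_lip_width \<gamma> K n M \<le> fixed_lip_width \<gamma> K n (As m) + ennreal (2 * \<gamma> * real n * \<epsilon>)"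
      using m0 that \<open>\<epsilon> > 0\<close> by (intro fixed_lip_width_le_close_auerbach_norm \<open>n \<ge> 1\<close> \<open>\<gamma> \<ge> 0\<close> As M) auto
    also have "\<dots> \<le> fixed_lip_width \<gamma> K n (As m) + ennreal e"
      using \<open>2 * \<gamma> * real n * \<epsilon> \<le> e\<close> by (intro add_left_mono ennreal_leI)
    finally show ?thesis .
  qed
  then show ?thesis by blast
qed

lemma exists_minimizing_seq_ennreal:
  fixes f :: "'a \<Rightarrow> ennreal"
  assumes "x0 \<in> S"
  obtains xs where "\<And>m. xs m \<in> S"
    and "\<And>m. f (xs m) \<le> (INF x\<in>S. f x) + ennreal (inverse (real (Suc m)))"
proof -
  have "\<exists>x\<in>S. f x \<le> (INF x\<in>S. f x) + ennreal (inverse (real (Suc m)))" for m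
  proof (cases "(INF x\<in>S. f x) = \<infinity>")
    case True
    then show ?thesis using \<open>x0 \<in> S\<close> by auto
  next
    case False
    have "inverse (real (Suc m)) > 0" by simp
    then obtain x where "x \<in> S" and "f x < (INF x\<in>S. f x) + ennreal (inverse (real (Suc m)))"
      using INF_approx_ennreal[OF _ refl False] by blast
    then show ?thesis by (auto intro: less_imp_le)
  qed
  then show thesis using that by metis
qed

lemma ennreal_attains_INF:
  fixes f :: "'a \<Rightarrow> ennreal"
  assumes "x0 \<in> S"
    and lsc: "\<And>xs :: nat \<Rightarrow> 'a. (\<And>m. xs m \<in> S) \<Longrightarrow> \<exists>r x. strict_mono r \<and> x \<in> S \<and>
      (\<forall>e>0. \<exists>m0::nat. \<forall>m\<ge>m0. f x \<le> f (xs (r m)) + ennreal e)"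
  shows "\<exists>x\<in>S. \<forall>y\<in>S. f x \<le> f y"
proof -
  define L where "L = (INF x\<in>S. f x)"
  obtain xs where xs: "\<And>m. xs m \<in> S" and xs_le: "\<And>m. f (xs m) \<le> L + ennreal (inverse (real (Suc m)))"
    using exists_minimizing_seq_ennreal[OF \<open>x0 \<in> S\<close>] unfolding L_def by blast
  obtain r x where "strict_mono r" and "x \<in> S"
    and lim: "\<forall>e>0. \<exists>m0::nat. \<forall>m\<ge>m0. f x \<le> f (xs (r m)) + ennreal e"
    using lsc[of xs, OF xs] by blast
  have "f x \<le> L"
  proof (rule ennreal_le_epsilon)
    fix e :: real assume "e > 0"
    obtain m0 where m0: "\<And>m. m \<ge> m0 \<Longrightarrow> f x \<le> f (xs (r m)) + ennreal (e / 2)"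
      using lim \<open>e > 0\<close> by (meson half_gt_zero)
    obtain m1 :: nat where m1: "inverse (real (Suc m1)) < e / 2"
      using reals_Archimedean \<open>e > 0\<close> by (metis half_gt_zero)
    define m where "m = max m0 m1"
    have "inverse (real (Suc (r m))) \<le> inverse (real (Suc m1))"
      using seq_suble[OF \<open>strict_mono r\<close>, of m] by (simp add: m_def le_imp_inverse_le)
    then have "ennreal (inverse (real (Suc (r m)))) \<le> ennreal (e / 2)"
      using m1 by (intro ennreal_leI) linarith
    then have "f x \<le> L + ennreal (e / 2) + ennreal (e / 2)"
      using m0[of m] xs_le[of "r m"] by (simp add: m_def) (meson add_mono order.trans order_refl)
    also have "\<dots> = L + ennreal e"
      using \<open>e > 0\<close> by (simp add: add.assoc flip: ennreal_plus)
    finally show "f x \<le> L + ennreal e" .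
  qed
  then show ?thesis
    using \<open>x \<in> S\<close> by (metis INF_lower L_def order.trans)
qed

lemma exists_auerbach_norm_min_fixed_lip_width:
  assumes "n \<ge> 1" and "\<gamma> \<ge> 0"
  shows "\<exists>M. auerbach_norm n M \<and>
    (\<forall>M'. auerbach_norm n M' \<longrightarrow> fixed_lip_width \<gamma> K n M \<le> fixed_lip_width \<gamma> K n M')"
proof -
  have "\<exists>M\<in>Collect (auerbach_norm n). \<forall>M'\<in>Collect (auerbach_norm n).
      fixed_lip_width \<gamma> K n M \<le> fixed_lip_width \<gamma> K n M'"
  proof (rule ennreal_attains_INF)
    show "l1_norm n \<in> Collect (auerbach_norm n)"
      using auerbach_norm_l1_norm[OF \<open>n \<ge> 1\<close>] by simp
    fix Ms :: "nat \<Rightarrow> (nat \<Rightarrow> real) \<Rightarrow> real"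
    assume "\<And>m. Ms m \<in> Collect (auerbach_norm n)"
    then have Ms: "\<And>m. auerbach_norm n (Ms m)" by simp
    obtain r M where "strict_mono r" and M: "auerbach_norm n M"
      and conv: "\<forall>e>0. \<exists>m0::nat. \<forall>m\<ge>m0. \<forall>y\<in>Rk n. \<bar>Ms (r m) y - M y\<bar> \<le> e * l1_norm n y"
      using auerbach_norm_seq_compact[where Ms = Ms, OF \<open>n \<ge> 1\<close> Ms] by blast
    then show "\<exists>r M. strict_mono r \<and> M \<in> Collect (auerbach_norm n) \<and>
        (\<forall>e>0. \<exists>m0::nat. \<forall>m\<ge>m0.
          fixed_lip_width \<gamma> K n M \<le> fixed_lip_width \<gamma> K n (Ms (r m)) + ennreal e)"
      using fixed_lip_width_lower_semicontinuous[where As = "\<lambda>m. Ms (r m)", OF \<open>n \<ge> 1\<close> \<open>\<gamma> \<ge> 0\<close> Ms M]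
      by blast
  qed
  then show ?thesis by auto
qed

theorem theorem3p3:
  fixes K :: "'a::banach set" and n :: nat and \<gamma> :: real
  assumes "n \<ge> 1" and "compact K" and "\<gamma> > 0"
  shows "\<exists>N. is_norm_on n N \<and>
           (\<forall>y\<in>Rk n. Max ((\<lambda>j. \<bar>y j\<bar>) ` {..<n}) \<le> N y \<and> N y \<le> (\<Sum>j<n. \<bar>y j\<bar>)) \<and>
           lip_width \<gamma> K n = fixed_lip_width \<gamma> K n N"
proof -
  have "\<gamma> \<ge> 0" using \<open>\<gamma> > 0\<close> by simp
  obtain M where M: "auerbach_norm n M"
    and M_min: "\<And>M'. auerbach_norm n M' \<Longrightarrow> fixed_lip_width \<gamma> K n M \<le> fixed_lip_width \<gamma> K n M'"
    using exists_auerbach_norm_min_fixed_lip_width[OF \<open>n \<ge> 1\<close> \<open>\<gamma> \<ge> 0\<close>] by blast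
  have "fixed_lip_width \<gamma> K n M \<le> fixed_lip_width \<gamma> K k N"
    if "k \<in> {1..n}" and N: "is_norm_on k N" for k N
  proof -
    obtain M' where "auerbach_norm n M'"
      and "fixed_lip_width \<gamma> K n M' \<le> fixed_lip_width \<gamma> K n (extend_norm k n N)"
      using exists_auerbach_norm_fixed_lip_width_le[OF is_norm_on_extend_norm[OF N] \<open>n \<ge> 1\<close> \<open>\<gamma> \<ge> 0\<close>]
      by blast
    then show ?thesis
      using M_min fixed_lip_width_extend_norm_le[OF N _ \<open>\<gamma> \<ge> 0\<close>, of n K] that
      by (meson atLeastAtMost_iff order.trans)
  qed
  then have "fixed_lip_width \<gamma> K n M \<le> lip_width \<gamma> K n"
    unfolding lip_width_def by (intro INF_greatest) auto
  moreover have "lip_width \<gamma> K n \<le> fixed_lip_width \<gamma> K n M"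
    unfolding lip_width_def using \<open>n \<ge> 1\<close> auerbach_norm_is_norm_on[OF M]
    by (intro INF_lower2[of n] INF_lower) auto
  ultimately show ?thesis
    using M by (intro exI[of _ M]) (auto simp: auerbach_norm_def max_norm_def l1_norm_def)
qed

end
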